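(* Let $\Lambda=\{z:\operatorname{Im}z>0\}$. For an integer $n\ge0$ let $\Omega_n=\{(p,q)\in\mathbb Z^2: 0\le p\le n,\ 0\le q\le n,\ (p,q)\ne(n,n)\}$, let $\mathcal A_n$ be the complex linear span of the functions $\frac{z^p\,\overline z^{\,q}}{(z-\overline z)^n}$, $(p,q)\in\Omega_n$, and $\mathcal A=\sum_{n\ge0}\mathcal A_n$. Let $\mathcal B$ be the space of all differential operators on $\Lambda$ that are finite sums of the form $$\sum_{\alpha,\beta,\gamma,\alpha',\beta',\gamma'\ge0}V_{\alpha,\beta,\gamma,\alpha',\beta',\gamma'}(z,\overline z)\Bigl(z^2\tfrac{\partial}{\partial z}\Bigr)^{\alpha}\Bigl(z\tfrac{\partial}{\partial z}\Bigr)^{\beta}\Bigl(\tfrac{\partial}{\partial z}\Bigr)^{\gamma}\Bigl(\overline z^{\,2}\tfrac{\partial}{\partial \overline z}\Bigr)^{\alpha'}\Bigl(\overline z\tfrac{\partial}{\partial \overline z}\Bigr)^{\beta'}\Bigl(\tfrac{\partial}{\partial \overline z}\Bigr)^{\gamma'},$$ with coefficients $V_{\alpha,\beta,\gamma,\alpha',\beta',\gamma'}\in\mathcal A$ (acting as multiplication operators). Then $\mathcal B$ is a subalgebra of the algebra of all differential operators on $\Lambda$, and $\mathcal B$ is generated (as an algebra) by the operators $$\frac{1}{z-\overline z},\quad z^2\frac{\partial}{\partial z},\quad z\frac{\partial}{\partial z},\quad \frac{\partial}{\partial z},\quad \overline z^{\,2}\frac{\partial}{\partial\overline z},\quad \overline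 z\frac{\partial}{\partial\overline z},\quad \frac{\partial}{\partial\overline z}.$$
   Context: $\frac{\partial}{\partial z}$, $\frac{\partial}{\partial\overline z}$ are the Wirtinger derivatives on $\Lambda$; $\frac1{z-\overline z}$ denotes the operator of multiplication by this function. *)

theory Defs
  imports "HOL-Analysis.Analysis"
begin

text \<open>Operators act on functions complex \<Rightarrow> complex; only values on the
upper half plane matter. The Wirtinger derivatives are defined through the
(real) Frechet derivative.\<close>

type_synonym cfun = "complex \<Rightarrow> complex"
type_synonym dop = "cfun \<Rightarrow> cfun"

definition Lambda :: "complex set" where
  "Lambda = {z. Im z > 0}"

definition wz :: dop where
  "wz f = (\<lambda>z. (frechet_derivative f (at z) 1 - \<i> * frechet_derivative f (at z) \<i>) / 2)"

definition wzb :: dop where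
  "wzb f = (\<lambda>z. (frechet_derivative f (at z) 1 + \<i> * frechet_derivative f (at z) \<i>) / 2)"

fun wirt_iter :: "bool list \<Rightarrow> dop" where
  "wirt_iter [] f = f"
| "wirt_iter (b # bs) f = (if b then wz else wzb) (wirt_iter bs f)"

definition smooth_on_C :: "complex set \<Rightarrow> cfun \<Rightarrow> bool" where
  "smooth_on_C S f \<longleftrightarrow> (\<forall>ws. wirt_iter ws f differentiable_on S)"

definition op_eq :: "dop \<Rightarrow> dop \<Rightarrow> bool" where
  "op_eq L M \<longleftrightarrow> (\<forall>f. smooth_on_C Lambda f \<longrightarrow> (\<forall>z\<in>Lambda. L f z = M f z))"

definition Omega :: "nat \<Rightarrow> (nat \<times> nat) set" where
  "Omega n = {(p, q). p \<le> n \<and> q \<le> n \<and> (p, q) \<noteq> (n, n)}"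

definition A_n :: "nat \<Rightarrow> cfun set" where
  "A_n n = {V. \<exists>c :: nat \<times> nat \<Rightarrow> complex.
       V = (\<lambda>z. \<Sum>(p, q)\<in>Omega n. c (p, q) * z ^ p * cnj z ^ q / (z - cnj z) ^ n)}"

definition A_all :: "cfun set" where
  "A_all = {V. \<exists>N Vs. (\<forall>n\<le>N. Vs n \<in> A_n n) \<and> V = (\<lambda>z. \<Sum>n\<le>N. Vs n z)}"

definition mult_op :: "cfun \<Rightarrow> dop" where
  "mult_op V f = (\<lambda>z. V z * f z)"

definition D1 :: dop where "D1 f = (\<lambda>z. z^2 * wz f z)"
definition D2 :: dop where "D2 f = (\<lambda>z. z * wz f z)"
definition D3 :: dop where "D3 f = wz f"
definition E1 :: dop where "E1 f = (\<lambda>z. (cnj z)^2 * wzb f z)"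
definition E2 :: dop where "E2 f = (\<lambda>z. cnj z * wzb f z)"
definition E3 :: dop where "E3 f = wzb f"

definition inv_diff :: dop where
  "inv_diff = mult_op (\<lambda>z. 1 / (z - cnj z))"

definition mono_op :: "nat \<times> nat \<times> nat \<times> nat \<times> nat \<times> nat \<Rightarrow> dop" where
  "mono_op t f = (case t of (a, b, c, a', b', c') \<Rightarrow>
     (D1 ^^ a) ((D2 ^^ b) ((D3 ^^ c) ((E1 ^^ a') ((E2 ^^ b') ((E3 ^^ c') f))))))"

definition B_ops :: "dop set" where
  "B_ops = {L. \<exists>S V. finite S \<and> (\<forall>t\<in>S. V t \<in> A_all) \<and>
      op_eq L (\<lambda>f z. \<Sum>t\<in>S. V t z * mono_op t f z)}"

definition op_add :: "dop \<Rightarrow> dop \<Rightarrow> dop" where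
  "op_add L M f = (\<lambda>z. L f z + M f z)"

definition op_scale :: "complex \<Rightarrow> dop \<Rightarrow> dop" where
  "op_scale c L f = (\<lambda>z. c * L f z)"

definition op_comp :: "dop \<Rightarrow> dop \<Rightarrow> dop" where
  "op_comp L M f = L (M f)"

inductive_set gen_alg :: "dop set \<Rightarrow> dop set" for G where
  gen_id: "(\<lambda>f. f) \<in> gen_alg G"
| gen_base: "g \<in> G \<Longrightarrow> g \<in> gen_alg G"
| gen_add: "L \<in> gen_alg G \<Longrightarrow> M \<in> gen_alg G \<Longrightarrow> op_add L M \<in> gen_alg G"
| gen_scale: "L \<in> gen_alg G \<Longrightarrow> op_scale c L \<in> gen_alg G"
| gen_comp: "L \<in> gen_alg G \<Longrightarrow> M \<in> gen_alg G \<Longrightarrow> op_comp L M \<in> gen_alg G"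

end

theory Submission
  imports Defs
begin

text \<open>Write \<open>u = 1/(z - cnj z)\<close>. The generated algebra lies in \<open>B_ops\<close> because
  \<open>B_ops\<close> contains the generators and is closed under composition: the coefficient space
  \<open>A_all\<close> is an algebra stable under \<open>z^k wz\<close> and \<open>cnj z^k wzb\<close> for \<open>k \<le> 2\<close>, so
  the Leibniz rule moves these operators past coefficients; \<open>D1, D2, D3\<close> satisfy the
  \<open>sl\<^sub>2\<close> relations, so their products can be reordered into \<open>D1^a D2^b D3^c\<close>, and
  likewise \<open>E1, E2, E3\<close>; and the two triples commute on smooth functions by the symmetry
  of mixed second derivatives.
  Conversely, multiplication by \<open>X V\<close> is the commutator of \<open>X\<close> with multiplication by
  \<open>V\<close>. Starting from \<open>u\<close>, this generates multiplication by \<open>z u\<close> and \<open>cnj z u\<close>,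
  then, iterating \<open>D1\<close> and \<open>E1\<close>, by \<open>z^(k+1) cnj z^k u^(k+1)\<close> and
  \<open>z^k cnj z^(k+1) u^(k+1)\<close>; every other basis function of \<open>A_all\<close> is a product of
  basis functions of lower degree.\<close>

section \<open>Wirtinger calculus\<close>

lemma open_Lambda: "open Lambda"
  unfolding Lambda_def by (rule open_halfspace_Im_gt)

lemma Lambda_diff_cnj_nonzero: "z \<in> Lambda \<Longrightarrow> z - cnj z \<noteq> 0"
  by (auto simp: Lambda_def complex_eq_iff)

lemma frechet_derivative_cong_open:
  assumes "open S" "z \<in> S" "\<And>w. w \<in> S \<Longrightarrow> f w = g w"
  shows "frechet_derivative f (at z) = frechet_derivative g (at z)"
proof -
  have "(f has_derivative D) (at z) \<longleftrightarrow> (g has_derivative D) (at z)" for D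
  proof
    show "(f has_derivative D) (at z) \<Longrightarrow> (g has_derivative D) (at z)"
      by (erule has_derivative_transform_within_open[OF _ assms(1,2)]) (simp add: assms(3))
    show "(g has_derivative D) (at z) \<Longrightarrow> (f has_derivative D) (at z)"
      by (erule has_derivative_transform_within_open[OF _ assms(1,2)]) (simp add: assms(3))
  qed
  then show ?thesis unfolding frechet_derivative_def by simp
qed

lemma wirtinger_cong_Lambda:
  assumes "\<forall>w\<in>Lambda. f w = g w" "z \<in> Lambda"
  shows "wz f z = wz g z" "wzb f z = wzb g z"
  using frechet_derivative_cong_open[OF open_Lambda assms(2), of f g] assms(1)
  by (simp_all add: wz_def wzb_def)

lemma real_linear_complex_decomp:
  assumes "linear D"
  shows "D h = (D 1 - \<i> * D \<i>) / 2 * h + (D 1 + \<i> * D \<i>) / 2 * cnj h"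
proof -
  have h: "h = Re h *\<^sub>R 1 + Im h *\<^sub>R \<i>" by (simp add: complex_eq_iff)
  have "D h = Re h *\<^sub>R D 1 + Im h *\<^sub>R D \<i>"
    by (subst h) (simp only: linear_add[OF assms] linear_scale[OF assms])
  also have "\<dots> = (D 1 - \<i> * D \<i>) / 2 * h + (D 1 + \<i> * D \<i>) / 2 * cnj h"
    by (subst (3 4) h[simplified scaleR_conv_of_real])
      (simp add: scaleR_conv_of_real algebra_simps field_simps)
  finally show ?thesis .
qed

lemma has_derivative_wirtinger:
  assumes "f differentiable (at z)"
  shows "(f has_derivative (\<lambda>h. wz f z * h + wzb f z * cnj h)) (at z)"
proof -
  let ?D = "frechet_derivative f (at z)"
  have D: "(f has_derivative ?D) (at z)" using assms frechet_derivative_works by blast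
  then have "?D = (\<lambda>h. wz f z * h + wzb f z * cnj h)"
    unfolding wz_def wzb_def
    by (intro ext, subst real_linear_complex_decomp) (auto dest: has_derivative_linear)
  with D show ?thesis by simp
qed

lemma wirtinger_eqI:
  assumes "(f has_derivative D) (at z)" "\<And>h. D h = A * h + B * cnj h"
  shows "wz f z = A" "wzb f z = B"
proof -
  have "frechet_derivative f (at z) = (\<lambda>h. A * h + B * cnj h)"
    using frechet_derivative_at[OF assms(1)] assms(2) by auto
  then show "wz f z = A" "wzb f z = B"
    by (simp_all add: wz_def wzb_def field_simps)
qed

lemma wz_const [simp]: "wz (\<lambda>_. c) = (\<lambda>_. 0)" and wzb_const [simp]: "wzb (\<lambda>_. c) = (\<lambda>_. 0)"
  using wirtinger_eqI[OF has_derivative_const, of 0 0] by auto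

lemma wz_ident [simp]: "wz (\<lambda>w. w) = (\<lambda>_. 1)" and wzb_ident [simp]: "wzb (\<lambda>w. w) = (\<lambda>_. 0)"
  using wirtinger_eqI[OF has_derivative_ident, of 1 0] by auto

lemma has_derivative_cnj_at: "(cnj has_derivative cnj) (at z within S)"
  using has_derivative_cnj[OF has_derivative_ident] by simp

lemma wz_cnj [simp]: "wz cnj = (\<lambda>_. 0)" and wzb_cnj [simp]: "wzb cnj = (\<lambda>_. 1)"
  using wirtinger_eqI[OF has_derivative_cnj_at, of 0 1] by auto

lemma differentiable_cnj: "cnj differentiable (at z within S)"
  using has_derivative_cnj_at unfolding differentiable_def by blast

lemma wirtinger_add:
  assumes "f differentiable (at z)" "g differentiable (at z)"
  shows "wz (\<lambda>w. f w + g w) z = wz f z + wz g z"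
    and "wzb (\<lambda>w. f w + g w) z = wzb f z + wzb g z"
  using wirtinger_eqI[OF has_derivative_add[OF assms[THEN has_derivative_wirtinger]],
      of "wz f z + wz g z" "wzb f z + wzb g z"]
  by (auto simp: algebra_simps)

lemma wirtinger_mult:
  assumes "f differentiable (at z)" "g differentiable (at z)"
  shows "wz (\<lambda>w. f w * g w) z = wz f z * g z + f z * wz g z"
    and "wzb (\<lambda>w. f w * g w) z = wzb f z * g z + f z * wzb g z"
  using wirtinger_eqI[OF has_derivative_mult[OF assms[THEN has_derivative_wirtinger]],
      of "wz f z * g z + f z * wz g z" "wzb f z * g z + f z * wzb g z"]
  by (auto simp: algebra_simps)

lemma wirtinger_power:
  assumes "f differentiable (at z)"
  shows "wz (\<lambda>w. f w ^ n) z = of_nat n * f z ^ (n - 1) * wz f z"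
    and "wzb (\<lambda>w. f w ^ n) z = of_nat n * f z ^ (n - 1) * wzb f z"
  using wirtinger_eqI[OF has_derivative_power[OF has_derivative_wirtinger[OF assms], of n],
      of "of_nat n * f z ^ (n - 1) * wz f z" "of_nat n * f z ^ (n - 1) * wzb f z"]
  by (auto simp: algebra_simps)

definition inv_diff_fun :: cfun where
  "inv_diff_fun z = 1 / (z - cnj z)"

lemma has_derivative_inv_diff_fun:
  assumes "z - cnj z \<noteq> 0"
  shows "(inv_diff_fun has_derivative
      (\<lambda>h. - (inv_diff_fun z ^ 2) * h + inv_diff_fun z ^ 2 * cnj h)) (at z)"
proof -
  have "((\<lambda>w. inverse (w - cnj w)) has_derivative
      (\<lambda>h. - (inverse (z - cnj z) * (h - cnj h) * inverse (z - cnj z)))) (at z)"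
    by (rule Deriv.has_derivative_inverse[where f = "\<lambda>w. w - cnj w", OF assms])
      (intro derivative_intros)
  moreover have "inv_diff_fun = (\<lambda>w. inverse (w - cnj w))"
    by (auto simp: inv_diff_fun_def divide_inverse)
  ultimately show ?thesis
    by (simp add: inv_diff_fun_def divide_inverse power2_eq_square algebra_simps)
qed

lemma wirtinger_inv_diff_fun:
  assumes "z \<in> Lambda"
  shows "wz inv_diff_fun z = - (inv_diff_fun z ^ 2)" "wzb inv_diff_fun z = inv_diff_fun z ^ 2"
  using wirtinger_eqI[OF has_derivative_inv_diff_fun[OF Lambda_diff_cnj_nonzero[OF assms]],
      of "- (inv_diff_fun z ^ 2)" "inv_diff_fun z ^ 2"]
  by auto

lemma differentiable_inv_diff_fun: "z \<in> Lambda \<Longrightarrow> inv_diff_fun differentiable (at z)"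
  using has_derivative_inv_diff_fun[OF Lambda_diff_cnj_nonzero] differentiable_def by blast

fun smooth_upto :: "nat \<Rightarrow> cfun \<Rightarrow> bool" where
  "smooth_upto 0 f \<longleftrightarrow> f differentiable_on Lambda"
| "smooth_upto (Suc n) f \<longleftrightarrow>
     f differentiable_on Lambda \<and> smooth_upto n (wz f) \<and> smooth_upto n (wzb f)"

abbreviation smooth :: "cfun \<Rightarrow> bool" where
  "smooth \<equiv> smooth_on_C Lambda"

lemma wirt_iter_snoc: "wirt_iter (ws @ [b]) f = wirt_iter ws ((if b then wz else wzb) f)"
  by (induction ws) auto

lemma all_lists_length_le_Suc:
  "(\<forall>ws. length ws \<le> Suc n \<longrightarrow> P ws) \<longleftrightarrow> P [] \<and> (\<forall>b ws. length ws \<le> n \<longrightarrow> P (ws @ [b]))"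
proof
  assume H: "P [] \<and> (\<forall>b ws. length ws \<le> n \<longrightarrow> P (ws @ [b]))"
  show "\<forall>ws. length ws \<le> Suc n \<longrightarrow> P ws"
  proof (intro allI impI)
    fix ws :: "'a list" assume "length ws \<le> Suc n"
    then show "P ws" using H by (cases ws rule: rev_exhaust) auto
  qed
qed simp

lemma smooth_upto_iff:
  "smooth_upto n f \<longleftrightarrow> (\<forall>ws. length ws \<le> n \<longrightarrow> wirt_iter ws f differentiable_on Lambda)"
proof (induction n arbitrary: f)
  case (Suc n)
  show ?case
    unfolding all_lists_length_le_Suc wirt_iter_snoc smooth_upto.simps Suc.IH all_bool_eq
    by auto
qed simp

lemma smooth_iff_smooth_upto: "smooth f \<longleftrightarrow> (\<forall>n. smooth_upto n f)"
  unfolding smooth_on_C_def smooth_upto_iff by blast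

lemma smooth_upto_Suc_imp: "smooth_upto (Suc n) f \<Longrightarrow> smooth_upto n f"
proof (induction n arbitrary: f)
  case (Suc n)
  have "f differentiable_on Lambda" "smooth_upto n (wz f)" "smooth_upto n (wzb f)"
    using Suc.prems Suc.IH[of "wz f"] Suc.IH[of "wzb f"] unfolding smooth_upto.simps(2)[of "Suc n"]
    by blast+
  then show ?case unfolding smooth_upto.simps(2)[of n] by blast
qed simp

lemma differentiable_on_Lambda_iff:
  "f differentiable_on Lambda \<longleftrightarrow> (\<forall>z\<in>Lambda. f differentiable (at z))"
  by (rule differentiable_on_eq_differentiable_at[OF open_Lambda])

lemma differentiable_on_Lambda_cong:
  assumes "f differentiable_on Lambda" "\<forall>w\<in>Lambda. f w = g w"
  shows "g differentiable_on Lambda"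
  unfolding differentiable_on_Lambda_iff
proof
  fix z assume "z \<in> Lambda"
  with assms obtain D where D: "(f has_derivative D) (at z)"
    unfolding differentiable_on_Lambda_iff differentiable_def by blast
  have "(g has_derivative D) (at z)"
    by (rule has_derivative_transform_within_open[OF D open_Lambda \<open>z \<in> Lambda\<close>])
      (use assms(2) in auto)
  then show "g differentiable (at z)" unfolding differentiable_def by blast
qed

lemma smooth_upto_cong:
  "smooth_upto n f \<Longrightarrow> \<forall>w\<in>Lambda. f w = g w \<Longrightarrow> smooth_upto n g"
proof (induction n arbitrary: f g)
  case 0
  then show ?case using differentiable_on_Lambda_cong[of f g] by simp
next
  case (Suc n)
  have f: "f differentiable_on Lambda" "smooth_upto n (wz f)" "smooth_upto n (wzb f)"
    using Suc.prems(1) by simp_all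
  have "smooth_upto n (wz g)"
    by (rule Suc.IH[OF f(2)]) (use wirtinger_cong_Lambda[OF Suc.prems(2)] in blast)
  moreover have "smooth_upto n (wzb g)"
    by (rule Suc.IH[OF f(3)]) (use wirtinger_cong_Lambda[OF Suc.prems(2)] in blast)
  ultimately
  show ?case using differentiable_on_Lambda_cong[OF f(1) Suc.prems(2)] by simp
qed

lemma smooth_upto_add:
  "smooth_upto n f \<Longrightarrow> smooth_upto n g \<Longrightarrow> smooth_upto n (\<lambda>w. f w + g w)"
proof (induction n arbitrary: f g)
  case 0
  then show ?case by (simp add: differentiable_on_add)
next
  case (Suc n)
  then have "\<forall>z\<in>Lambda. f differentiable (at z) \<and> g differentiable (at z)"
    by (simp add: differentiable_on_Lambda_iff)
  then have eq: "\<forall>z\<in>Lambda. wz f z + wz g z = wz (\<lambda>w. f w + g w) z"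
    "\<forall>z\<in>Lambda. wzb f z + wzb g z = wzb (\<lambda>w. f w + g w) z"
    by (simp_all add: wirtinger_add)
  have f: "smooth_upto n (wz f)" "smooth_upto n (wzb f)"
    and g: "smooth_upto n (wz g)" "smooth_upto n (wzb g)"
    using Suc.prems by simp_all
  have "smooth_upto n (wz (\<lambda>w. f w + g w))"
    by (rule smooth_upto_cong[OF Suc.IH[OF f(1) g(1)] eq(1)])
  moreover have "smooth_upto n (wzb (\<lambda>w. f w + g w))"
    by (rule smooth_upto_cong[OF Suc.IH[OF f(2) g(2)] eq(2)])
  ultimately show ?case using Suc.prems by (simp add: differentiable_on_add)
qed

lemma smooth_upto_mult:
  "smooth_upto n f \<Longrightarrow> smooth_upto n g \<Longrightarrow> smooth_upto n (\<lambda>w. f w * g w)"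
proof (induction n arbitrary: f g)
  case 0
  then show ?case by (simp add: differentiable_on_mult)
next
  case (Suc n)
  then have "\<forall>z\<in>Lambda. f differentiable (at z) \<and> g differentiable (at z)"
    by (simp add: differentiable_on_Lambda_iff)
  then have eq: "\<forall>z\<in>Lambda. wz f z * g z + f z * wz g z = wz (\<lambda>w. f w * g w) z"
    "\<forall>z\<in>Lambda. wzb f z * g z + f z * wzb g z = wzb (\<lambda>w. f w * g w) z"
    by (simp_all add: wirtinger_mult)
  have f: "smooth_upto n f" "smooth_upto n (wz f)" "smooth_upto n (wzb f)"
    and g: "smooth_upto n g" "smooth_upto n (wz g)" "smooth_upto n (wzb g)"
    using Suc.prems smooth_upto_Suc_imp[of n f] smooth_upto_Suc_imp[of n g] by simp_all
  have "smooth_upto n (wz (\<lambda>w. f w * g w))"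
    by (rule smooth_upto_cong[OF smooth_upto_add[OF Suc.IH[OF f(2) g(1)] Suc.IH[OF f(1) g(2)]]
          eq(1)])
  moreover have "smooth_upto n (wzb (\<lambda>w. f w * g w))"
    by (rule smooth_upto_cong[OF smooth_upto_add[OF Suc.IH[OF f(3) g(1)] Suc.IH[OF f(1) g(3)]]
          eq(2)])
  ultimately show ?case using Suc.prems by (simp add: differentiable_on_mult)
qed

lemma smooth_upto_const: "smooth_upto n (\<lambda>_. c)"
  by (induction n arbitrary: c) simp_all

lemma smooth_upto_ident: "smooth_upto n (\<lambda>w. w)"
  by (cases n) (simp_all add: smooth_upto_const)

lemma smooth_upto_cnj: "smooth_upto n cnj"
  by (cases n) (simp_all add: smooth_upto_const differentiable_cnj differentiable_on_def)

lemma smooth_upto_inv_diff_fun: "smooth_upto n inv_diff_fun"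
proof (induction n)
  case 0
  show ?case by (simp add: differentiable_on_Lambda_iff differentiable_inv_diff_fun)
next
  case (Suc n)
  have sq: "smooth_upto n (\<lambda>w. inv_diff_fun w * inv_diff_fun w)"
    by (rule smooth_upto_mult[OF Suc Suc])
  have "smooth_upto n (wz inv_diff_fun)"
    by (rule smooth_upto_cong[OF smooth_upto_mult[OF smooth_upto_const sq, of "-1"]])
      (simp add: wirtinger_inv_diff_fun power2_eq_square)
  moreover have "smooth_upto n (wzb inv_diff_fun)"
    by (rule smooth_upto_cong[OF sq]) (simp add: wirtinger_inv_diff_fun power2_eq_square)
  ultimately show ?case
    by (simp add: differentiable_on_Lambda_iff differentiable_inv_diff_fun)
qed

lemma smooth_cong: "smooth f \<Longrightarrow> (\<And>w. w \<in> Lambda \<Longrightarrow> f w = g w) \<Longrightarrow> smooth g"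
  unfolding smooth_iff_smooth_upto using smooth_upto_cong[of _ f g] by blast

lemma smooth_add: "smooth f \<Longrightarrow> smooth g \<Longrightarrow> smooth (\<lambda>w. f w + g w)"
  unfolding smooth_iff_smooth_upto using smooth_upto_add[of _ f g] by blast

lemma smooth_mult: "smooth f \<Longrightarrow> smooth g \<Longrightarrow> smooth (\<lambda>w. f w * g w)"
  unfolding smooth_iff_smooth_upto using smooth_upto_mult[of _ f g] by blast

lemma smooth_const: "smooth (\<lambda>_. c)"
  unfolding smooth_iff_smooth_upto using smooth_upto_const by blast

lemma smooth_ident: "smooth (\<lambda>w. w)"
  unfolding smooth_iff_smooth_upto using smooth_upto_ident by blast

lemma smooth_cnj: "smooth cnj"
  unfolding smooth_iff_smooth_upto using smooth_upto_cnj by blast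

lemma smooth_inv_diff_fun: "smooth inv_diff_fun"
  unfolding smooth_iff_smooth_upto using smooth_upto_inv_diff_fun by blast

lemma
  assumes "smooth f"
  shows smooth_wz: "smooth (wz f)" and smooth_wzb: "smooth (wzb f)"
  using assms wirt_iter_snoc[of _ True f, symmetric] wirt_iter_snoc[of _ False f, symmetric]
  unfolding smooth_on_C_def by simp_all

lemma smooth_differentiable:
  assumes "smooth f" "z \<in> Lambda"
  shows "f differentiable (at z)"
proof -
  have "wirt_iter [] f differentiable_on Lambda"
    using assms(1) unfolding smooth_on_C_def by blast
  with assms(2) show ?thesis by (simp add: differentiable_on_Lambda_iff)
qed

lemma smooth_cmult: "smooth f \<Longrightarrow> smooth (\<lambda>w. c * f w)"
  by (rule smooth_mult[OF smooth_const])

lemma smooth_power: "smooth f \<Longrightarrow> smooth (\<lambda>w. f w ^ k)"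
  by (induction k) (simp_all add: smooth_const smooth_mult)

section \<open>Symmetry of mixed second derivatives\<close>

lemma has_vector_derivative_along_line:
  assumes "(f has_derivative F) (at (a + t *\<^sub>R v))"
  shows "((\<lambda>s. f (a + s *\<^sub>R v)) has_vector_derivative F v) (at t within T)"
proof -
  have "((\<lambda>s. a + s *\<^sub>R v) has_derivative (\<lambda>s. s *\<^sub>R v)) (at t within T)"
    by (intro derivative_eq_intros) auto
  from has_derivative_compose[OF this assms] show ?thesis
    unfolding has_vector_derivative_def o_def
    using linear_scale[OF has_derivative_linear[OF assms]] by simp
qed

lemma increment_additive_bound:
  fixes F :: "'a::real_normed_vector \<Rightarrow> 'b::real_normed_vector"
  assumes G: "linear G" and e: "e \<ge> 0" and a: "norm a \<le> t" and b: "norm b \<le> t"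
    and R: "\<And>w. norm w \<le> 2 * t \<Longrightarrow> norm (F (z + w) - F z - G w) \<le> e * norm w"
  shows "norm ((F (z + a + b) - F (z + b)) - (F (z + a) - F z)) \<le> 4 * e * t"
proof -
  define R' where "R' w = F (z + w) - F z - G w" for w
  have ab: "norm (a + b) \<le> 2 * t" "norm a \<le> 2 * t" "norm b \<le> 2 * t"
    using norm_triangle_ineq[of a b] a b norm_ge_zero[of a] by linarith+
  have "(F (z + a + b) - F (z + b)) - (F (z + a) - F z) = R' (a + b) - R' b - R' a"
    unfolding R'_def using linear_add[OF G, of a b] by (simp add: add.assoc)
  also have "norm \<dots> \<le> norm (R' (a + b)) + norm (R' b) + norm (R' a)"
    by (rule order_trans[OF norm_triangle_ineq4 add_mono[OF norm_triangle_ineq4 order_refl]])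
  also have "\<dots> \<le> e * (2 * t) + e * t + e * t"
    using R[OF ab(1)] R[OF ab(2)] R[OF ab(3)]
      mult_left_mono[OF ab(1) e] mult_left_mono[OF a e] mult_left_mono[OF b e]
    unfolding R'_def by linarith
  finally show ?thesis by simp
qed

text \<open>Mean value inequality for \<open>\<tau> \<mapsto> f (z + t u + \<tau> v) - f (z + \<tau> v)\<close> on \<open>[0, t]\<close>.\<close>

lemma second_difference_bound:
  fixes f :: "'a::real_normed_vector \<Rightarrow> 'b::real_normed_vector"
  assumes t: "t \<ge> 0" and e: "e \<ge> 0" and nu: "norm u = 1" and nv: "norm v = 1"
    and F: "\<And>w. norm w \<le> 2 * t \<Longrightarrow> (f has_derivative F (z + w)) (at (z + w))"
    and G: "linear G"
    and R: "\<And>w. norm w \<le> 2 * t \<Longrightarrow> norm (F (z + w) v - F z v - G w) \<le> e * norm w"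
  shows "norm (f (z + t *\<^sub>R u + t *\<^sub>R v) - f (z + t *\<^sub>R v) - f (z + t *\<^sub>R u) + f z
      - (t\<^sup>2) *\<^sub>R G u) \<le> 5 * e * t\<^sup>2"
proof -
  define \<psi> where "\<psi> \<tau> = f (z + t *\<^sub>R u + \<tau> *\<^sub>R v) - f (z + \<tau> *\<^sub>R v)" for \<tau>
  define \<psi>' where "\<psi>' \<tau> = F (z + t *\<^sub>R u + \<tau> *\<^sub>R v) v - F (z + \<tau> *\<^sub>R v) v" for \<tau>
  have tu: "norm (t *\<^sub>R u) \<le> t"
    using t nu by simp
  have \<tau>v: "norm (\<tau> *\<^sub>R v) \<le> t" if "\<tau> \<in> {0..t}" for \<tau>
    using that nv by simp
  have "(\<psi> has_vector_derivative \<psi>' \<tau>) (at \<tau> within {0..t})" if "\<tau> \<in> {0..t}" for \<tau>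
  proof -
    have "norm (t *\<^sub>R u + \<tau> *\<^sub>R v) \<le> 2 * t" "norm (\<tau> *\<^sub>R v) \<le> 2 * t"
      using norm_triangle_ineq[of "t *\<^sub>R u" "\<tau> *\<^sub>R v"] tu \<tau>v[OF that] t by linarith+
    from F[OF this(1)] F[OF this(2)] show ?thesis
      unfolding \<psi>_def \<psi>'_def
      by (intro has_vector_derivative_diff has_vector_derivative_along_line)
        (simp_all add: add.assoc)
  qed
  moreover have "norm (\<psi>' \<tau> - \<psi>' 0) \<le> 4 * e * t" if "\<tau> \<in> {0..t}" for \<tau>
    using increment_additive_bound[OF G e tu \<tau>v[OF that], of "\<lambda>w. F w v" z] R
    unfolding \<psi>'_def by (simp add: algebra_simps)
  ultimately have lin: "norm (\<psi> t - \<psi> 0 - (t - 0) *\<^sub>R \<psi>' 0) \<le> norm (t - 0) * (4 * e * t)"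
    using t by (intro vector_differentiable_bound_linearization[of "{0..t}"])
      (auto simp: closed_segment_eq_real_ivl)
  have rem: "norm (t *\<^sub>R (F (z + t *\<^sub>R u) v - F z v - G (t *\<^sub>R u))) \<le> t * (e * t)"
    using R[of "t *\<^sub>R u"] t nu by (simp add: mult_left_mono)
  have "f (z + t *\<^sub>R u + t *\<^sub>R v) - f (z + t *\<^sub>R v) - f (z + t *\<^sub>R u) + f z - (t\<^sup>2) *\<^sub>R G u
      = (\<psi> t - \<psi> 0 - (t - 0) *\<^sub>R \<psi>' 0) + t *\<^sub>R (F (z + t *\<^sub>R u) v - F z v - G (t *\<^sub>R u))"
    unfolding \<psi>_def \<psi>'_def using linear_scale[OF G, of t u]
    by (simp add: algebra_simps power2_eq_square)
  also have "norm \<dots> \<le> t * (4 * e * t) + t * (e * t)"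
    using norm_triangle_ineq lin rem t by (smt (verit) real_norm_def)
  also have "\<dots> = 5 * e * t\<^sup>2"
    by (simp add: power2_eq_square algebra_simps)
  finally show ?thesis .
qed

lemma second_difference_approx:
  fixes f :: "'a::real_normed_vector \<Rightarrow> 'b::real_normed_vector"
  assumes S: "open S" "z \<in> S" and F: "\<And>w. w \<in> S \<Longrightarrow> (f has_derivative F w) (at w)"
    and Gv: "((\<lambda>w. F w v) has_derivative Gv) (at z)"
    and nu: "norm u = 1" and nv: "norm v = 1" and e: "e > 0"
  obtains d where "d > 0" "\<And>t. 0 < t \<Longrightarrow> t < d \<Longrightarrow>
    norm (f (z + t *\<^sub>R u + t *\<^sub>R v) - f (z + t *\<^sub>R v) - f (z + t *\<^sub>R u) + f z - (t\<^sup>2) *\<^sub>R Gv u)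
      \<le> 5 * e * t\<^sup>2"
proof -
  obtain d1 where d1: "d1 > 0"
    "\<And>y. norm (y - z) < d1 \<Longrightarrow> norm (F y v - F z v - Gv (y - z)) \<le> e * norm (y - z)"
    using Gv e unfolding has_derivative_at_alt by blast
  obtain d2 where d2: "d2 > 0" "ball z d2 \<subseteq> S"
    using S open_contains_ball by blast
  show ?thesis
  proof (rule that[of "min d1 d2 / 2"])
    show "min d1 d2 / 2 > 0"
      using d1 d2 by simp
    fix t assume t: "0 < t" "t < min d1 d2 / 2"
    have "(f has_derivative F (z + w)) (at (z + w))" if "norm w \<le> 2 * t" for w
      using F d2(2) that t by (auto simp: dist_norm subset_iff)
    moreover have "norm (F (z + w) v - F z v - Gv w) \<le> e * norm w" if "norm w \<le> 2 * t" for w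
      using d1(2)[of "z + w"] that t by simp
    ultimately show "norm (f (z + t *\<^sub>R u + t *\<^sub>R v) - f (z + t *\<^sub>R v) - f (z + t *\<^sub>R u) + f z
        - (t\<^sup>2) *\<^sub>R Gv u) \<le> 5 * e * t\<^sup>2"
      using t e nu nv Gv by (intro second_difference_bound) (auto dest: has_derivative_linear)
  qed
qed

text \<open>Young's theorem: the second difference is approximated both by \<open>t\<^sup>2 Gv u\<close> and,
  with the roles of \<open>u\<close> and \<open>v\<close> exchanged, by \<open>t\<^sup>2 Gu v\<close>.\<close>

lemma second_derivative_symmetric:
  fixes f :: "'a::real_normed_vector \<Rightarrow> 'b::real_normed_vector"
  assumes S: "open S" "z \<in> S" and F: "\<And>w. w \<in> S \<Longrightarrow> (f has_derivative F w) (at w)"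
    and Gu: "((\<lambda>w. F w u) has_derivative Gu) (at z)"
    and Gv: "((\<lambda>w. F w v) has_derivative Gv) (at z)"
    and nu: "norm u = 1" and nv: "norm v = 1"
  shows "Gv u = Gu v"
proof (rule ccontr)
  assume ne: "Gv u \<noteq> Gu v"
  define e where "e = norm (Gv u - Gu v) / 20"
  have e: "e > 0" using ne by (simp add: e_def)
  obtain d1 where d1: "d1 > 0" "\<And>t. 0 < t \<Longrightarrow> t < d1 \<Longrightarrow>
    norm (f (z + t *\<^sub>R u + t *\<^sub>R v) - f (z + t *\<^sub>R v) - f (z + t *\<^sub>R u) + f z - (t\<^sup>2) *\<^sub>R Gv u)
      \<le> 5 * e * t\<^sup>2"
    using second_difference_approx[OF S F Gv nu nv e] by blast
  obtain d2 where d2: "d2 > 0" "\<And>t. 0 < t \<Longrightarrow> t < d2 \<Longrightarrow>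
    norm (f (z + t *\<^sub>R v + t *\<^sub>R u) - f (z + t *\<^sub>R u) - f (z + t *\<^sub>R v) + f z - (t\<^sup>2) *\<^sub>R Gu v)
      \<le> 5 * e * t\<^sup>2"
    using second_difference_approx[OF S F Gu nv nu e] by blast
  define t where "t = min d1 d2 / 2"
  have t: "0 < t" "t < d1" "t < d2" using d1(1) d2(1) by (auto simp: t_def)
  define \<Delta> where "\<Delta> = f (z + t *\<^sub>R u + t *\<^sub>R v) - f (z + t *\<^sub>R v) - f (z + t *\<^sub>R u) + f z"
  have "norm (\<Delta> - (t\<^sup>2) *\<^sub>R Gv u) \<le> 5 * e * t\<^sup>2" "norm (\<Delta> - (t\<^sup>2) *\<^sub>R Gu v) \<le> 5 * e * t\<^sup>2"
    using d1(2)[OF t(1,2)] d2(2)[OF t(1,3)] unfolding \<Delta>_def by (simp_all add: algebra_simps)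
  moreover have "t\<^sup>2 * norm (Gv u - Gu v) \<le> norm (\<Delta> - (t\<^sup>2) *\<^sub>R Gu v) + norm (\<Delta> - (t\<^sup>2) *\<^sub>R Gv u)"
  proof -
    have "(t\<^sup>2) *\<^sub>R (Gv u - Gu v) = (\<Delta> - (t\<^sup>2) *\<^sub>R Gu v) - (\<Delta> - (t\<^sup>2) *\<^sub>R Gv u)"
      by (simp add: algebra_simps)
    then show ?thesis by (metis abs_power2 norm_scaleR norm_triangle_ineq4)
  qed
  moreover have "5 * e * t\<^sup>2 + 5 * e * t\<^sup>2 = t\<^sup>2 * (norm (Gv u - Gu v) / 2)"
    by (simp add: e_def)
  ultimately have "t\<^sup>2 * norm (Gv u - Gu v) \<le> t\<^sup>2 * (norm (Gv u - Gu v) / 2)"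
    by linarith
  with t(1) ne show False by simp
qed

lemma wz_wzb_commute:
  assumes g: "smooth g" and z: "z \<in> Lambda"
  shows "wz (wzb g) z = wzb (wz g) z"
proof -
  let ?P = "wz g" and ?Q = "wzb g"
  have P: "?P differentiable (at z)" and Q: "?Q differentiable (at z)"
    using smooth_differentiable[OF smooth_wz[OF g] z] smooth_differentiable[OF smooth_wzb[OF g] z] .
  have d1: "((\<lambda>w. ?P w * 1 + ?Q w * cnj 1) has_derivative
     (\<lambda>h. (wz ?P z * h + wzb ?P z * cnj h) + (wz ?Q z * h + wzb ?Q z * cnj h))) (at z)"
    using has_derivative_add[OF has_derivative_wirtinger[OF P] has_derivative_wirtinger[OF Q]]
    by simp
  have d\<i>: "((\<lambda>w. ?P w * \<i> + ?Q w * cnj \<i>) has_derivative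
     (\<lambda>h. \<i> * (wz ?P z * h + wzb ?P z * cnj h) - \<i> * (wz ?Q z * h + wzb ?Q z * cnj h))) (at z)"
    using has_derivative_diff[OF has_derivative_wirtinger[OF P] has_derivative_wirtinger[OF Q],
        THEN has_derivative_mult_right[of _ _ _ \<i>]]
    by (simp add: algebra_simps)
  from second_derivative_symmetric[OF open_Lambda z
      has_derivative_wirtinger[OF smooth_differentiable[OF g]] d1 d\<i>]
  have "\<i> * (2 * wz ?Q z - 2 * wzb ?P z) = 0"
    by (simp add: algebra_simps)
  then show ?thesis by simp
qed

definition admissible_op :: "dop \<Rightarrow> bool" where
  "admissible_op X \<longleftrightarrow>
     (\<forall>f g. (\<forall>z\<in>Lambda. f z = g z) \<longrightarrow> (\<forall>z\<in>Lambda. X f z = X g z)) \<and>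
     (\<forall>f. smooth f \<longrightarrow> smooth (X f)) \<and>
     (\<forall>f g a b. smooth f \<longrightarrow> smooth g \<longrightarrow>
        (\<forall>z\<in>Lambda. X (\<lambda>w. a * f w + b * g w) z = a * X f z + b * X g z))"

lemma admissible_op_cong:
  "admissible_op X \<Longrightarrow> \<forall>w\<in>Lambda. f w = g w \<Longrightarrow> z \<in> Lambda \<Longrightarrow> X f z = X g z"
  unfolding admissible_op_def by blast

lemma admissible_op_smooth: "admissible_op X \<Longrightarrow> smooth f \<Longrightarrow> smooth (X f)"
  unfolding admissible_op_def by blast

lemma admissible_op_linear:
  "admissible_op X \<Longrightarrow> smooth f \<Longrightarrow> smooth g \<Longrightarrow> z \<in> Lambda \<Longrightarrow>
    X (\<lambda>w. a * f w + b * g w) z = a * X f z + b * X g z"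
  unfolding admissible_op_def by blast

lemma admissible_op_zero: "admissible_op X \<Longrightarrow> z \<in> Lambda \<Longrightarrow> X (\<lambda>_. 0) z = 0"
  using admissible_op_linear[of X "\<lambda>_. 0" "\<lambda>_. 0" z 0 0] smooth_const by simp

lemma admissible_op_cmult:
  "admissible_op X \<Longrightarrow> smooth f \<Longrightarrow> z \<in> Lambda \<Longrightarrow> X (\<lambda>w. a * f w) z = a * X f z"
  using admissible_op_linear[of X f f z a 0] by simp

lemma admissible_op_add:
  "admissible_op X \<Longrightarrow> smooth f \<Longrightarrow> smooth g \<Longrightarrow> z \<in> Lambda \<Longrightarrow>
    X (\<lambda>w. f w + g w) z = X f z + X g z"
  using admissible_op_linear[of X f g z 1 1] by simp

lemma admissible_op_id: "admissible_op (\<lambda>f. f)"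
  unfolding admissible_op_def by simp

lemma admissible_op_comp:
  assumes X: "admissible_op X" and Y: "admissible_op Y"
  shows "admissible_op (\<lambda>f. X (Y f))"
  unfolding admissible_op_def
proof (intro conjI allI impI ballI)
  fix f g :: cfun and z assume "\<forall>z\<in>Lambda. f z = g z" "z \<in> Lambda"
  then show "X (Y f) z = X (Y g) z"
    by (blast intro: admissible_op_cong[OF X] admissible_op_cong[OF Y])
next
  fix f :: cfun assume "smooth f"
  then show "smooth (X (Y f))" by (intro admissible_op_smooth[OF X] admissible_op_smooth[OF Y])
next
  fix f g :: cfun and a b :: complex and z
  assume f: "smooth f" and g: "smooth g" and z: "z \<in> Lambda"
  have "X (Y (\<lambda>w. a * f w + b * g w)) z = X (\<lambda>w. a * Y f w + b * Y g w) z"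
    using admissible_op_linear[OF Y f g] by (intro admissible_op_cong[OF X _ z]) blast
  also have "\<dots> = a * X (Y f) z + b * X (Y g) z"
    using admissible_op_smooth[OF Y] f g z by (intro admissible_op_linear[OF X])
  finally show "X (Y (\<lambda>w. a * f w + b * g w)) z = a * X (Y f) z + b * X (Y g) z" .
qed

lemma admissible_op_funpow: "admissible_op X \<Longrightarrow> admissible_op (X ^^ n)"
  by (induction n) (simp_all add: admissible_op_id[unfolded id_def[symmetric]]
      admissible_op_comp[unfolded comp_def[symmetric]])

lemma admissible_op_mult_op: "smooth V \<Longrightarrow> admissible_op (mult_op V)"
  unfolding admissible_op_def mult_op_def by (auto simp: smooth_mult algebra_simps)

lemma admissible_op_op_add:
  assumes L: "admissible_op L" and M: "admissible_op M"
  shows "admissible_op (op_add L M)"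
  unfolding admissible_op_def op_add_def
proof (intro conjI allI impI ballI)
  fix f g :: cfun and z assume "\<forall>z\<in>Lambda. f z = g z" "z \<in> Lambda"
  then show "L f z + M f z = L g z + M g z"
    using admissible_op_cong[OF L, of f g z] admissible_op_cong[OF M, of f g z] by simp
next
  fix f :: cfun assume "smooth f"
  then show "smooth (\<lambda>z. L f z + M f z)"
    by (intro smooth_add admissible_op_smooth[OF L] admissible_op_smooth[OF M])
next
  fix f g :: cfun and a b :: complex and z
  assume "smooth f" "smooth g" "z \<in> Lambda"
  then show "L (\<lambda>w. a * f w + b * g w) z + M (\<lambda>w. a * f w + b * g w) z
      = a * (L f z + M f z) + b * (L g z + M g z)"
    using admissible_op_linear[OF L] admissible_op_linear[OF M] by (simp add: algebra_simps)
qed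

lemma admissible_op_op_scale: "admissible_op L \<Longrightarrow> admissible_op (op_scale c L)"
  unfolding admissible_op_def op_scale_def by (auto simp: smooth_cmult algebra_simps)

definition dz :: "nat \<Rightarrow> dop" where
  "dz k f z = z ^ k * wz f z"

definition dzb :: "nat \<Rightarrow> dop" where
  "dzb k f z = cnj z ^ k * wzb f z"

lemma D_eq_dz: "D1 = dz 2" "D2 = dz 1" "D3 = dz 0"
  by (simp_all add: fun_eq_iff D1_def D2_def D3_def dz_def)

lemma E_eq_dzb: "E1 = dzb 2" "E2 = dzb 1" "E3 = dzb 0"
  by (simp_all add: fun_eq_iff E1_def E2_def E3_def dzb_def)

lemma smooth_dz: "smooth f \<Longrightarrow> smooth (dz k f)"
  and smooth_dzb: "smooth f \<Longrightarrow> smooth (dzb k f)"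
  unfolding dz_def[abs_def] dzb_def[abs_def]
  by (intro smooth_mult smooth_power smooth_ident smooth_cnj smooth_wz smooth_wzb; assumption)+

lemma
  assumes "smooth f" "smooth g" "z \<in> Lambda"
  shows dz_mult: "dz k (\<lambda>w. f w * g w) z = dz k f z * g z + f z * dz k g z"
    and dzb_mult: "dzb k (\<lambda>w. f w * g w) z = dzb k f z * g z + f z * dzb k g z"
  using wirtinger_mult[OF smooth_differentiable[OF assms(1,3)] smooth_differentiable[OF assms(2,3)]]
  by (simp_all add: dz_def dzb_def algebra_simps)

lemma admissible_op_dz: "admissible_op (dz k)"
  and admissible_op_dzb: "admissible_op (dzb k)"
  unfolding admissible_op_def
  by (auto simp: smooth_dz smooth_dzb dz_def dzb_def wirtinger_cong_Lambda wirtinger_add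
      wirtinger_mult smooth_differentiable smooth_cmult algebra_simps)

lemma differentiable_power_ident: "(\<lambda>w. w ^ k) differentiable (at z)"
  and differentiable_power_cnj: "(\<lambda>w. cnj w ^ k) differentiable (at z)"
  using differentiable_cnj by (auto intro!: derivative_intros)

lemma
  assumes h: "h differentiable (at z)"
  shows wz_power_mult: "wz (\<lambda>w. w ^ k * h w) z = of_nat k * z ^ (k - 1) * h z + z ^ k * wz h z"
    and wzb_power_mult: "wzb (\<lambda>w. w ^ k * h w) z = z ^ k * wzb h z"
    and wz_cnj_power_mult: "wz (\<lambda>w. cnj w ^ k * h w) z = cnj z ^ k * wz h z"
    and wzb_cnj_power_mult:
      "wzb (\<lambda>w. cnj w ^ k * h w) z = of_nat k * cnj z ^ (k - 1) * h z + cnj z ^ k * wzb h z"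
  using wirtinger_mult[OF differentiable_power_ident h, of k]
    wirtinger_mult[OF differentiable_power_cnj h, of k]
    wirtinger_power[OF differentiable_ident, where n = k]
    wirtinger_power[OF differentiable_cnj, where n = k]
  by simp_all

lemma
  assumes g: "smooth g" and z: "z \<in> Lambda"
  shows dz_dz: "dz j (dz k g) z = z ^ j * (of_nat k * z ^ (k - 1) * wz g z + z ^ k * wz (wz g) z)"
    and dzb_dzb: "dzb j (dzb k g) z
      = cnj z ^ j * (of_nat k * cnj z ^ (k - 1) * wzb g z + cnj z ^ k * wzb (wzb g) z)"
  using wz_power_mult(1)[OF smooth_differentiable[OF smooth_wz[OF g] z], of k]
    wzb_cnj_power_mult[OF smooth_differentiable[OF smooth_wzb[OF g] z], of k]
  unfolding dz_def dzb_def by simp_all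

lemma dzb_dz_commute:
  assumes g: "smooth g" and z: "z \<in> Lambda"
  shows "dzb j (dz k g) z = dz k (dzb j g) z"
  using wzb_power_mult[OF smooth_differentiable[OF smooth_wz[OF g] z], of k]
    wz_cnj_power_mult[OF smooth_differentiable[OF smooth_wzb[OF g] z], of j]
    wz_wzb_commute[OF g z]
  unfolding dz_def dzb_def by (simp add: mult_ac)

abbreviation deriv_gens :: "dop set" where
  "deriv_gens \<equiv> {D1, D2, D3, E1, E2, E3}"

lemma admissible_op_deriv_gen: "X \<in> deriv_gens \<Longrightarrow> admissible_op X"
  by (auto simp: D_eq_dz E_eq_dzb admissible_op_dz admissible_op_dzb)

lemma deriv_gen_mult:
  "X \<in> deriv_gens \<Longrightarrow> smooth f \<Longrightarrow> smooth g \<Longrightarrow> z \<in> Lambda \<Longrightarrow>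
    X (\<lambda>w. f w * g w) z = X f z * g z + f z * X g z"
  by (auto simp: D_eq_dz E_eq_dzb dz_mult dzb_mult)

section \<open>The coefficient algebra\<close>

definition monom_fun :: "nat \<Rightarrow> nat \<Rightarrow> nat \<Rightarrow> cfun" where
  "monom_fun p q n z = z ^ p * cnj z ^ q / (z - cnj z) ^ n"

lemma finite_Omega: "finite (Omega n)"
  by (rule finite_subset[of _ "{..n} \<times> {..n}"]) (auto simp: Omega_def)

lemma monom_conv_inv_diff_fun: "monom_fun p q n z = z ^ p * cnj z ^ q * inv_diff_fun z ^ n"
  by (simp add: monom_fun_def inv_diff_fun_def power_one_over)

lemma inv_diff_fun_eq_monom: "inv_diff_fun = monom_fun 0 0 1"
  by (simp add: fun_eq_iff monom_fun_def inv_diff_fun_def)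

lemma monom_mult:
  "monom_fun p q n z * monom_fun p' q' n' z = monom_fun (p + p') (q + q') (n + n') z"
  by (simp add: monom_fun_def power_add)

lemma monom_Suc_left: "z * monom_fun p q n z = monom_fun (Suc p) q n z"
  and monom_Suc_right: "cnj z * monom_fun p q n z = monom_fun p (Suc q) n z"
  by (simp_all add: monom_fun_def)

lemma monom_raise:
  assumes "z \<in> Lambda"
  shows "monom_fun p q n z = monom_fun (Suc p) q (Suc n) z - monom_fun p (Suc q) (Suc n) z"
proof -
  have "monom_fun (Suc p) q (Suc n) z - monom_fun p (Suc q) (Suc n) z
      = (z ^ p * cnj z ^ q) * (z - cnj z) / ((z - cnj z) * (z - cnj z) ^ n)"
    by (simp add: monom_fun_def diff_divide_distrib[symmetric] algebra_simps)
  with Lambda_diff_cnj_nonzero[OF assms] show ?thesis by (simp add: monom_fun_def)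
qed

lemma smooth_monom: "smooth (monom_fun p q n)"
  unfolding monom_conv_inv_diff_fun[abs_def]
  by (intro smooth_mult smooth_power smooth_ident smooth_cnj smooth_inv_diff_fun)

lemma
  assumes z: "z \<in> Lambda"
  shows wz_monom: "wz (monom_fun p q n) z
      = of_nat p * monom_fun (p - 1) q n z - of_nat n * monom_fun p q (Suc n) z"
    and wzb_monom: "wzb (monom_fun p q n) z
      = of_nat q * monom_fun p (q - 1) n z + of_nat n * monom_fun p q (Suc n) z"
proof -
  have d: "(\<lambda>w. w ^ p * cnj w ^ q) differentiable (at z)"
    "(\<lambda>w. inv_diff_fun w ^ n) differentiable (at z)"
    using differentiable_power_ident differentiable_power_cnj differentiable_inv_diff_fun[OF z]
    by (auto intro!: derivative_intros)
  have pq: "wz (\<lambda>w. w ^ p * cnj w ^ q) z = of_nat p * z ^ (p - 1) * cnj z ^ q"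
    "wzb (\<lambda>w. w ^ p * cnj w ^ q) z = of_nat q * z ^ p * cnj z ^ (q - 1)"
    using wirtinger_mult[OF differentiable_power_ident[of p z] differentiable_power_cnj[of q z]]
      wirtinger_power[OF differentiable_ident, where n = p]
      wirtinger_power[OF differentiable_cnj, where n = q]
    by simp_all
  have shift: "of_nat n * x ^ (n - 1) * x\<^sup>2 = of_nat n * x ^ Suc n" for x :: complex
    by (cases n) (simp_all add: power2_eq_square)
  have u: "wz (\<lambda>w. inv_diff_fun w ^ n) z = - (of_nat n * inv_diff_fun z ^ Suc n)"
    "wzb (\<lambda>w. inv_diff_fun w ^ n) z = of_nat n * inv_diff_fun z ^ Suc n"
    using wirtinger_power[OF differentiable_inv_diff_fun[OF z], of n]
      wirtinger_inv_diff_fun[OF z] shift[of "inv_diff_fun z"]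
    by simp_all
  have "monom_fun p q n = (\<lambda>w. (w ^ p * cnj w ^ q) * inv_diff_fun w ^ n)"
    by (simp add: fun_eq_iff monom_conv_inv_diff_fun)
  then show "wz (monom_fun p q n) z
      = of_nat p * monom_fun (p - 1) q n z - of_nat n * monom_fun p q (Suc n) z"
    "wzb (monom_fun p q n) z
      = of_nat q * monom_fun p (q - 1) n z + of_nat n * monom_fun p q (Suc n) z"
    using wirtinger_mult[OF d] pq u by (simp_all add: monom_conv_inv_diff_fun algebra_simps)
qed

lemma
  assumes z: "z \<in> Lambda"
  shows D3_monom: "D3 (monom_fun p q n) z
      = of_nat p * monom_fun (p - 1) q n z - of_nat n * monom_fun p q (Suc n) z"
    and E3_monom: "E3 (monom_fun p q n) z
      = of_nat q * monom_fun p (q - 1) n z + of_nat n * monom_fun p q (Suc n) z"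
  by (simp_all add: D3_def E3_def wz_monom[OF z] wzb_monom[OF z])

lemma
  assumes z: "z \<in> Lambda"
  shows D2_monom: "D2 (monom_fun p q n) z
      = of_nat p * monom_fun p q n z - of_nat n * monom_fun (Suc p) q (Suc n) z"
    and E2_monom: "E2 (monom_fun p q n) z
      = of_nat q * monom_fun p q n z + of_nat n * monom_fun p (Suc q) (Suc n) z"
proof -
  have lower: "of_nat p * (z * monom_fun (p - 1) q n z) = of_nat p * monom_fun p q n z"
    "of_nat q * (cnj z * monom_fun p (q - 1) n z) = of_nat q * monom_fun p q n z"
    by (cases p, simp_all add: monom_Suc_left) (cases q, simp_all add: monom_Suc_right)
  have "D2 (monom_fun p q n) z
      = of_nat p * (z * monom_fun (p - 1) q n z) - of_nat n * (z * monom_fun p q (Suc n) z)"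
    "E2 (monom_fun p q n) z
      = of_nat q * (cnj z * monom_fun p (q - 1) n z) + of_nat n * (cnj z * monom_fun p q (Suc n) z)"
    by (simp_all add: D2_def E2_def wz_monom[OF z] wzb_monom[OF z] algebra_simps)
  then show "D2 (monom_fun p q n) z
      = of_nat p * monom_fun p q n z - of_nat n * monom_fun (Suc p) q (Suc n) z"
    and "E2 (monom_fun p q n) z
      = of_nat q * monom_fun p q n z + of_nat n * monom_fun p (Suc q) (Suc n) z"
    unfolding lower unfolding monom_Suc_left monom_Suc_right .
qed

lemma
  assumes z: "z \<in> Lambda"
  shows D1_monom: "D1 (monom_fun p q n) z
      = (of_nat p - of_nat n) * monom_fun (Suc (Suc p)) q (Suc n) z
        - of_nat p * monom_fun (Suc p) (Suc q) (Suc n) z"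
    and E1_monom: "E1 (monom_fun p q n) z
      = of_nat q * monom_fun (Suc p) (Suc q) (Suc n) z
        + (of_nat n - of_nat q) * monom_fun p (Suc (Suc q)) (Suc n) z"
proof -
  have "D1 (monom_fun p q n) z = z * D2 (monom_fun p q n) z"
    by (simp add: D1_def D2_def power2_eq_square)
  also have "\<dots>
      = of_nat p * (z * monom_fun p q n z) - of_nat n * (z * monom_fun (Suc p) q (Suc n) z)"
    unfolding D2_monom[OF z] by (simp add: algebra_simps)
  also have "\<dots>
      = of_nat p * monom_fun (Suc p) q n z - of_nat n * monom_fun (Suc (Suc p)) q (Suc n) z"
    by (simp only: monom_Suc_left)
  also have "\<dots> = (of_nat p - of_nat n) * monom_fun (Suc (Suc p)) q (Suc n) z
      - of_nat p * monom_fun (Suc p) (Suc q) (Suc n) z"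
    unfolding monom_raise[OF z, of "Suc p" q n] by (simp add: algebra_simps)
  finally show "D1 (monom_fun p q n) z = (of_nat p - of_nat n) * monom_fun (Suc (Suc p)) q (Suc n) z
      - of_nat p * monom_fun (Suc p) (Suc q) (Suc n) z" .
  have "E1 (monom_fun p q n) z = cnj z * E2 (monom_fun p q n) z"
    by (simp add: E1_def E2_def power2_eq_square)
  also have "\<dots> = of_nat q * (cnj z * monom_fun p q n z)
      + of_nat n * (cnj z * monom_fun p (Suc q) (Suc n) z)"
    unfolding E2_monom[OF z] by (simp add: algebra_simps)
  also have "\<dots>
      = of_nat q * monom_fun p (Suc q) n z + of_nat n * monom_fun p (Suc (Suc q)) (Suc n) z"
    by (simp only: monom_Suc_right)
  also have "\<dots> = of_nat q * monom_fun (Suc p) (Suc q) (Suc n) z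
      + (of_nat n - of_nat q) * monom_fun p (Suc (Suc q)) (Suc n) z"
    unfolding monom_raise[OF z, of p "Suc q" n] by (simp add: algebra_simps)
  finally show "E1 (monom_fun p q n) z = of_nat q * monom_fun (Suc p) (Suc q) (Suc n) z
      + (of_nat n - of_nat q) * monom_fun p (Suc (Suc q)) (Suc n) z" .
qed

text \<open>Coefficients only matter on \<open>Lambda\<close>, hence the congruence rule; \<open>A_coeff_iff\<close>
  relates \<open>A_coeff\<close> to \<open>A_all\<close>.\<close>

inductive A_coeff :: "cfun \<Rightarrow> bool" where
  A_coeff_zero: "A_coeff (\<lambda>_. 0)"
| A_coeff_monom: "(p, q) \<in> Omega n \<Longrightarrow> A_coeff (\<lambda>z. c * monom_fun p q n z)"
| A_coeff_add: "A_coeff V \<Longrightarrow> A_coeff W \<Longrightarrow> A_coeff (\<lambda>z. V z + W z)"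
| A_coeff_cong: "A_coeff V \<Longrightarrow> (\<And>z. z \<in> Lambda \<Longrightarrow> W z = V z) \<Longrightarrow> A_coeff W"

lemma A_coeff_scaled_monom:
  "(c \<noteq> 0 \<Longrightarrow> (p, q) \<in> Omega n) \<Longrightarrow> A_coeff (\<lambda>z. c * monom_fun p q n z)"
  by (cases "c = 0") (simp_all add: A_coeff_zero A_coeff_monom)

lemma A_coeff_sum:
  "finite I \<Longrightarrow> (\<And>i. i \<in> I \<Longrightarrow> A_coeff (f i)) \<Longrightarrow> A_coeff (\<lambda>z. \<Sum>i\<in>I. f i z)"
  by (induction I rule: finite_induct) (simp_all add: A_coeff_zero A_coeff_add)

lemma A_n_zero: "(\<lambda>_. 0) \<in> A_n n"
  unfolding A_n_def by (auto intro!: exI[of _ "\<lambda>_. 0"])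

lemma A_n_add:
  assumes "V \<in> A_n n" "W \<in> A_n n"
  shows "(\<lambda>z. V z + W z) \<in> A_n n"
proof -
  obtain c d where
    "V = (\<lambda>z. \<Sum>(p, q)\<in>Omega n. c (p, q) * z ^ p * cnj z ^ q / (z - cnj z) ^ n)"
    "W = (\<lambda>z. \<Sum>(p, q)\<in>Omega n. d (p, q) * z ^ p * cnj z ^ q / (z - cnj z) ^ n)"
    using assms unfolding A_n_def by blast
  then show ?thesis
    unfolding A_n_def
    by (auto intro!: exI[of _ "\<lambda>x. c x + d x"] simp: sum.distrib[symmetric] split_def
        add_divide_distrib algebra_simps)
qed

lemma A_n_monom:
  assumes "(p, q) \<in> Omega n"
  shows "(\<lambda>z. c * monom_fun p q n z) \<in> A_n n"
proof -
  have "(case x of (p', q') \<Rightarrow>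
        (if (p', q') = (p, q) then c else 0) * z ^ p' * cnj z ^ q' / (z - cnj z) ^ n)
      = (if x = (p, q) then c * monom_fun p q n z else 0)" for x z
    by (cases "x = (p, q)") (auto simp: monom_fun_def split: prod.split)
  then have "(\<Sum>(p', q')\<in>Omega n.
        (if (p', q') = (p, q) then c else 0) * z ^ p' * cnj z ^ q' / (z - cnj z) ^ n)
      = (\<Sum>x\<in>Omega n. if x = (p, q) then c * monom_fun p q n z else 0)" for z
    by simp
  also have "\<dots> z = c * monom_fun p q n z" for z
    using assms finite_Omega by (simp add: sum.delta')
  finally show ?thesis
    unfolding A_n_def by (auto intro!: exI[of _ "\<lambda>x. if x = (p, q) then c else 0"])
qed

lemma A_all_of_A_n:
  assumes "V \<in> A_n k"
  shows "V \<in> A_all"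
proof -
  define Vs where "Vs n = (if n = k then V else (\<lambda>_. 0))" for n
  have "Vs n z = (if n = k then V z else 0)" for n z
    by (simp add: Vs_def)
  then have "V = (\<lambda>z. \<Sum>n\<le>k. Vs n z)"
    by simp
  moreover have "\<forall>n\<le>k. Vs n \<in> A_n n"
    using assms A_n_zero by (simp add: Vs_def)
  ultimately show ?thesis
    unfolding A_all_def by blast
qed

lemma A_all_add:
  assumes "V \<in> A_all" "W \<in> A_all"
  shows "(\<lambda>z. V z + W z) \<in> A_all"
proof -
  obtain N Vs where V: "\<forall>n\<le>N. Vs n \<in> A_n n" "V = (\<lambda>z. \<Sum>n\<le>N. Vs n z)"
    using assms(1) unfolding A_all_def by blast
  obtain M Ws where W: "\<forall>n\<le>M. Ws n \<in> A_n n" "W = (\<lambda>z. \<Sum>n\<le>M. Ws n z)"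
    using assms(2) unfolding A_all_def by blast
  define Us where "Us n z = (if n \<le> N then Vs n z else 0) + (if n \<le> M then Ws n z else 0)" for n z
  have "Us n \<in> A_n n" for n
  proof -
    have "(\<lambda>z. if n \<le> N then Vs n z else 0) \<in> A_n n" "(\<lambda>z. if n \<le> M then Ws n z else 0) \<in> A_n n"
      by (cases "n \<le> N", simp_all add: V(1) A_n_zero) (cases "n \<le> M", simp_all add: W(1) A_n_zero)
    then show ?thesis unfolding Us_def by (rule A_n_add)
  qed
  moreover have "(\<Sum>n\<le>max N M. if n \<le> K then f n else 0) = (\<Sum>n\<le>K. f n)"
    if "K \<le> max N M" for K and f :: "nat \<Rightarrow> complex"
    using that sum.inter_restrict[of "{..max N M}" f "{..K}"]
    by (simp add: Int_absorb1)
  then have "(\<lambda>z. V z + W z) = (\<lambda>z. \<Sum>n\<le>max N M. Us n z)"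
    unfolding V(2) W(2) Us_def sum.distrib by simp
  ultimately show ?thesis
    unfolding A_all_def by blast
qed

lemma A_coeff_iff: "A_coeff V \<longleftrightarrow> (\<exists>W\<in>A_all. \<forall>z\<in>Lambda. V z = W z)"
proof
  assume "A_coeff V"
  then show "\<exists>W\<in>A_all. \<forall>z\<in>Lambda. V z = W z"
  proof (induction rule: A_coeff.induct)
    case A_coeff_zero
    show ?case using A_all_of_A_n[OF A_n_zero] by (intro bexI) auto
  next
    case (A_coeff_monom p q n c)
    show ?case using A_all_of_A_n[OF A_n_monom[OF A_coeff_monom, of c]] by (intro bexI) auto
  next
    case (A_coeff_add V W)
    then show ?case using A_all_add by fastforce
  qed auto
next
  assume "\<exists>W\<in>A_all. \<forall>z\<in>Lambda. V z = W z"
  then obtain N Vs where Vs: "\<forall>n\<le>N. Vs n \<in> A_n n" and V: "\<forall>z\<in>Lambda. V z = (\<Sum>n\<le>N. Vs n z)"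
    unfolding A_all_def by auto
  have "A_coeff (Vs n)" if n: "n \<le> N" for n
  proof -
    obtain c where c: "Vs n = (\<lambda>z. \<Sum>(p, q)\<in>Omega n. c (p, q) * z ^ p * cnj z ^ q / (z - cnj z) ^ n)"
      using Vs n unfolding A_n_def by blast
    have "A_coeff (\<lambda>z. \<Sum>x\<in>Omega n. c x * monom_fun (fst x) (snd x) n z)"
      by (intro A_coeff_sum finite_Omega A_coeff_monom) auto
    then show ?thesis
      by (rule A_coeff_cong) (simp add: c split_def monom_fun_def mult.assoc)
  qed
  then have "A_coeff (\<lambda>z. \<Sum>n\<le>N. Vs n z)"
    by (intro A_coeff_sum) auto
  then show "A_coeff V"
    by (rule A_coeff_cong) (simp add: V)
qed

lemma A_coeff_smooth: "A_coeff V \<Longrightarrow> smooth V"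
  by (induction rule: A_coeff.induct)
    (auto intro: smooth_const smooth_cmult smooth_monom smooth_add smooth_cong)

lemma A_coeff_cmult: "A_coeff V \<Longrightarrow> A_coeff (\<lambda>z. c * V z)"
proof (induction rule: A_coeff.induct)
  case (A_coeff_monom p q n c')
  then show ?case using A_coeff.A_coeff_monom[of p q n "c * c'"] by (simp add: mult.assoc)
next
  case (A_coeff_add V W)
  then show ?case using A_coeff.A_coeff_add by (simp add: distrib_left)
qed (auto intro: A_coeff.intros)

lemma A_coeff_mult_monom:
  assumes "A_coeff W" "(p, q) \<in> Omega n"
  shows "A_coeff (\<lambda>z. c * monom_fun p q n z * W z)"
  using assms(1)
proof (induction rule: A_coeff.induct)
  case (A_coeff_monom p' q' n' c')
  have "(p + p', q + q') \<in> Omega (n + n')"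
    using assms(2) A_coeff_monom by (auto simp: Omega_def)
  then show ?case
    using A_coeff.A_coeff_monom[of "p + p'" "q + q'" "n + n'" "c * c'"]
    by (simp add: monom_mult[symmetric] mult_ac)
next
  case (A_coeff_add V W)
  then show ?case using A_coeff.A_coeff_add by (simp add: distrib_left)
qed (auto intro: A_coeff.intros)

lemma A_coeff_mult: "A_coeff V \<Longrightarrow> A_coeff W \<Longrightarrow> A_coeff (\<lambda>z. V z * W z)"
proof (induction rule: A_coeff.induct)
  case (A_coeff_add V1 V2)
  then show ?case using A_coeff.A_coeff_add by (simp add: distrib_right)
qed (auto intro: A_coeff.intros A_coeff_mult_monom)

lemma A_coeff_one: "A_coeff (\<lambda>_. 1)"
proof (rule A_coeff_cong)
  show "A_coeff (\<lambda>z. 1 * monom_fun 1 0 1 z + (- 1) * monom_fun 0 1 1 z)"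
    by (intro A_coeff_add A_coeff_monom) (auto simp: Omega_def)
  show "1 = 1 * monom_fun 1 0 1 z + (- 1) * monom_fun 0 1 1 z" if "z \<in> Lambda" for z
    using monom_raise[OF that, of 0 0 0] by (simp add: monom_fun_def)
qed

lemma A_coeff_const: "A_coeff (\<lambda>_. c)"
  using A_coeff_cmult[OF A_coeff_one, of c] by simp

lemma A_coeff_inv_diff_fun: "A_coeff inv_diff_fun"
  using A_coeff_monom[of 0 0 1 1] by (simp add: inv_diff_fun_eq_monom Omega_def)

lemma A_coeff_admissible_op:
  assumes X: "admissible_op X"
    and monoms: "\<And>p q n. (p, q) \<in> Omega n \<Longrightarrow> A_coeff (X (monom_fun p q n))"
    and "A_coeff V"
  shows "A_coeff (X V)"
  using \<open>A_coeff V\<close>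
proof (induction rule: A_coeff.induct)
  case A_coeff_zero
  show ?case
    by (rule A_coeff_cong[OF A_coeff.A_coeff_zero]) (rule admissible_op_zero[OF X])
next
  case (A_coeff_monom p q n c)
  show ?case
    by (rule A_coeff_cong[OF A_coeff_cmult[OF monoms[OF A_coeff_monom]]])
      (rule admissible_op_cmult[OF X smooth_monom])
next
  case (A_coeff_add V W)
  have "smooth V" "smooth W"
    using A_coeff_add.hyps by (simp_all add: A_coeff_smooth)
  show ?case
    by (rule A_coeff_cong[OF A_coeff.A_coeff_add[OF A_coeff_add.IH]])
      (simp add: admissible_op_add[OF X \<open>smooth V\<close> \<open>smooth W\<close>])
next
  case (A_coeff_cong V W)
  then show ?case
    using admissible_op_cong[OF X] A_coeff.A_coeff_cong by metis
qed

lemma A_coeff_deriv_gen: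
  assumes X: "X \<in> deriv_gens" and V: "A_coeff V"
  shows "A_coeff (X V)"
proof (rule A_coeff_admissible_op[OF admissible_op_deriv_gen[OF X] _ V])
  fix p q n assume pq: "(p, q) \<in> Omega n"
  let ?A = "\<lambda>a p q n b p' q' n'. A_coeff (\<lambda>z. a * monom_fun p q n z + b * monom_fun p' q' n' z)"
  have A: "?A (of_nat p) (p - 1) q n (- of_nat n) p q (Suc n)"
    "?A (of_nat p) p q n (- of_nat n) (Suc p) q (Suc n)"
    "?A (of_nat p - of_nat n) (Suc (Suc p)) q (Suc n) (- of_nat p) (Suc p) (Suc q) (Suc n)"
    "?A (of_nat q) p (q - 1) n (of_nat n) p q (Suc n)"
    "?A (of_nat q) p q n (of_nat n) p (Suc q) (Suc n)"
    "?A (of_nat q) (Suc p) (Suc q) (Suc n) (of_nat n - of_nat q) p (Suc (Suc q)) (Suc n)"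
    using pq by (intro A_coeff_add A_coeff_scaled_monom; auto simp: Omega_def)+
  from X consider "X = D3" | "X = D2" | "X = D1" | "X = E3" | "X = E2" | "X = E1"
    by blast
  then show "A_coeff (X (monom_fun p q n))"
  proof cases
    case 1
    show ?thesis unfolding 1 by (rule A_coeff_cong[OF A(1)]) (simp add: D3_monom)
  next
    case 2
    show ?thesis unfolding 2 by (rule A_coeff_cong[OF A(2)]) (simp add: D2_monom)
  next
    case 3
    show ?thesis unfolding 3 by (rule A_coeff_cong[OF A(3)]) (simp add: D1_monom)
  next
    case 4
    show ?thesis unfolding 4 by (rule A_coeff_cong[OF A(4)]) (simp add: E3_monom)
  next
    case 5
    show ?thesis unfolding 5 by (rule A_coeff_cong[OF A(5)]) (simp add: E2_monom)
  next
    case 6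
    show ?thesis unfolding 6 by (rule A_coeff_cong[OF A(6)]) (simp add: E1_monom)
  qed
qed

section \<open>Ordered monomials in an \<open>sl\<^sub>2\<close>-triple of operators\<close>

text \<open>\<open>X1 = z\<^sup>2 \<partial>\<close>, \<open>X2 = z \<partial>\<close>, \<open>X3 = \<partial>\<close> satisfy the commutation relations of
  \<open>sl\<^sub>2\<close>, and these alone allow every product to be rewritten in the ordered form
  \<open>X1\<^sup>a X2\<^sup>b X3\<^sup>c\<close> (Poincare-Birkhoff-Witt).\<close>

locale sl2_triple =
  fixes X1 X2 X3 :: dop
  assumes admissible: "admissible_op X1" "admissible_op X2" "admissible_op X3"
    and comm12: "\<And>g z. smooth g \<Longrightarrow> z \<in> Lambda \<Longrightarrow> X2 (X1 g) z = X1 (X2 g) z + X1 g z"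
    and comm13: "\<And>g z. smooth g \<Longrightarrow> z \<in> Lambda \<Longrightarrow> X3 (X1 g) z = X1 (X3 g) z + 2 * X2 g z"
    and comm23: "\<And>g z. smooth g \<Longrightarrow> z \<in> Lambda \<Longrightarrow> X3 (X2 g) z = X2 (X3 g) z + X3 g z"
begin

definition ord_mono :: "nat \<times> nat \<times> nat \<Rightarrow> dop" where
  "ord_mono s g = (case s of (a, b, c) \<Rightarrow> (X1 ^^ a) ((X2 ^^ b) ((X3 ^^ c) g)))"

lemma ord_mono_eq [simp]: "ord_mono (a, b, c) = (\<lambda>g. (X1 ^^ a) ((X2 ^^ b) ((X3 ^^ c) g)))"
  by (simp add: ord_mono_def fun_eq_iff)

lemma admissible_op_ord_mono: "admissible_op (ord_mono s)"
proof -
  obtain a b c where s: "s = (a, b, c)" by (cases s)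
  have "admissible_op (\<lambda>g. (X1 ^^ a) ((X2 ^^ b) ((X3 ^^ c) g)))"
    using admissible_op_comp[OF admissible_op_funpow[OF admissible(1)]
        admissible_op_comp[OF admissible_op_funpow[OF admissible(2)]
          admissible_op_funpow[OF admissible(3)]]] .
  then show ?thesis by (simp add: s)
qed

inductive ord_span :: "dop \<Rightarrow> bool" where
  ord_span_mono: "ord_span (ord_mono s)"
| ord_span_zero: "ord_span (\<lambda>g z. 0)"
| ord_span_add: "ord_span A \<Longrightarrow> ord_span B \<Longrightarrow> ord_span (\<lambda>g z. A g z + B g z)"
| ord_span_scale: "ord_span A \<Longrightarrow> ord_span (\<lambda>g z. c * A g z)"
| ord_span_cong: "ord_span A \<Longrightarrow> (\<And>g z. smooth g \<Longrightarrow> z \<in> Lambda \<Longrightarrow> B g z = A g z) \<Longrightarrow> ord_span B"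

lemma ord_span_smooth: "ord_span A \<Longrightarrow> smooth g \<Longrightarrow> smooth (A g)"
proof (induction rule: ord_span.induct)
  case (ord_span_cong A B)
  then show ?case using smooth_cong[of "A g" "B g"] by simp
qed (simp_all add: admissible_op_smooth[OF admissible_op_ord_mono] smooth_const smooth_add
    smooth_cmult)

lemma ord_span_comp_left:
  assumes X: "admissible_op X" and XW: "\<And>s. ord_span (\<lambda>g. X (ord_mono s g))"
    and "ord_span A"
  shows "ord_span (\<lambda>g. X (A g))"
  using \<open>ord_span A\<close>
proof (induction rule: ord_span.induct)
  case ord_span_zero
  show ?case by (rule ord_span_cong[OF ord_span.ord_span_zero]) (rule admissible_op_zero[OF X])
next
  case (ord_span_add A B)
  show ?case
  proof (rule ord_span_cong[OF ord_span.ord_span_add[OF ord_span_add.IH]])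
    fix g z assume "smooth g" "z \<in> Lambda"
    then show "X (\<lambda>z. A g z + B g z) z = X (A g) z + X (B g) z"
      using ord_span_add.hyps by (intro admissible_op_add[OF X]) (simp_all add: ord_span_smooth)
  qed
next
  case (ord_span_scale A c)
  show ?case
  proof (rule ord_span_cong[OF ord_span.ord_span_scale[OF ord_span_scale.IH]])
    fix g z assume "smooth g" "z \<in> Lambda"
    then show "X (\<lambda>z. c * A g z) z = c * X (A g) z"
      using ord_span_scale.hyps by (intro admissible_op_cmult[OF X]) (simp_all add: ord_span_smooth)
  qed
next
  case (ord_span_cong A B)
  show ?case
  proof (rule ord_span.ord_span_cong[OF ord_span_cong.IH])
    fix g z assume "smooth g" "z \<in> Lambda"
    then show "X (B g) z = X (A g) z"
      using ord_span_cong.hyps(2) by (intro admissible_op_cong[OF X]) simp_all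
  qed
qed (rule XW)

lemma ord_span_X1: "ord_span (\<lambda>g. X1 (ord_mono s g))"
proof -
  obtain a b c where s: "s = (a, b, c)" by (cases s)
  show ?thesis using ord_span_mono[of "(Suc a, b, c)"] by (simp add: s)
qed

lemma comm12_power:
  assumes g: "smooth g" and z: "z \<in> Lambda"
  shows "X2 ((X1 ^^ a) g) z = (X1 ^^ a) (X2 g) z + of_nat a * (X1 ^^ a) g z"
  using z
proof (induction a arbitrary: z)
  case (Suc a)
  have s1: "smooth ((X1 ^^ a) g)" and s2: "smooth ((X1 ^^ a) (X2 g))"
    using admissible g by (simp_all add: admissible_op_smooth admissible_op_funpow)
  have "X2 ((X1 ^^ Suc a) g) z = X1 (X2 ((X1 ^^ a) g)) z + X1 ((X1 ^^ a) g) z"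
    using comm12[OF s1 Suc.prems] by simp
  also have "X1 (X2 ((X1 ^^ a) g)) z = X1 (\<lambda>w. 1 * (X1 ^^ a) (X2 g) w + of_nat a * (X1 ^^ a) g w) z"
    using Suc.IH by (intro admissible_op_cong[OF admissible(1) _ Suc.prems]) simp
  also have "\<dots> = X1 ((X1 ^^ a) (X2 g)) z + of_nat a * X1 ((X1 ^^ a) g) z"
    using admissible_op_linear[OF admissible(1) s2 s1 Suc.prems, of 1 "of_nat a"] by simp
  finally show ?case by (simp add: algebra_simps)
qed simp

lemma ord_span_X2: "ord_span (\<lambda>g. X2 (ord_mono s g))"
proof -
  obtain a b c where s: "s = (a, b, c)" by (cases s)
  have "ord_span (\<lambda>g z. ord_mono (a, Suc b, c) g z + of_nat a * ord_mono (a, b, c) g z)"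
    by (intro ord_span_add ord_span_scale ord_span_mono)
  then show ?thesis
  proof (rule ord_span_cong)
    fix g z assume "smooth g" "z \<in> Lambda"
    moreover have "smooth ((X2 ^^ b) ((X3 ^^ c) g))"
      using admissible \<open>smooth g\<close> by (simp add: admissible_op_smooth admissible_op_funpow)
    ultimately show "X2 (ord_mono s g) z
        = ord_mono (a, Suc b, c) g z + of_nat a * ord_mono (a, b, c) g z"
      using comm12_power by (simp add: s)
  qed
qed

lemma ord_span_X3: "ord_span (\<lambda>g. X3 (ord_mono s g))"
proof -
  have X3_0: "ord_span (\<lambda>g. X3 (ord_mono (0, b, c) g))" for b c
  proof (induction b)
    case 0
    show ?case using ord_span_mono[of "(0, 0, Suc c)"] by simp
  next
    case (Suc b)
    have "ord_span (\<lambda>g z. X2 (X3 (ord_mono (0, b, c) g)) z + X3 (ord_mono (0, b, c) g) z)"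
      by (intro ord_span_add ord_span_comp_left[OF admissible(2) ord_span_X2] Suc.IH)
    then show ?case
    proof (rule ord_span_cong)
      fix g z assume "smooth g" "z \<in> Lambda"
      then show "X3 (ord_mono (0, Suc b, c) g) z
          = X2 (X3 (ord_mono (0, b, c) g)) z + X3 (ord_mono (0, b, c) g) z"
        using comm23[OF admissible_op_smooth[OF admissible_op_ord_mono, of g "(0, b, c)"]] by simp
    qed
  qed
  have "ord_span (\<lambda>g. X3 (ord_mono (a, b, c) g))" for a b c
  proof (induction a)
    case (Suc a)
    have "ord_span (\<lambda>g z. X1 (X3 (ord_mono (a, b, c) g)) z + 2 * X2 (ord_mono (a, b, c) g) z)"
      by (intro ord_span_add ord_span_scale ord_span_comp_left[OF admissible(1) ord_span_X1] Suc.IH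
          ord_span_X2)
    then show ?case
    proof (rule ord_span_cong)
      fix g z assume "smooth g" "z \<in> Lambda"
      then show "X3 (ord_mono (Suc a, b, c) g) z
          = X1 (X3 (ord_mono (a, b, c) g)) z + 2 * X2 (ord_mono (a, b, c) g) z"
        using comm13[OF admissible_op_smooth[OF admissible_op_ord_mono, of g "(a, b, c)"]] by simp
    qed
  qed (rule X3_0)
  then show ?thesis by (cases s) auto
qed

end

interpretation D_triple: sl2_triple D1 D2 D3
proof
  fix g z assume "smooth g" "z \<in> Lambda"
  then show "D2 (D1 g) z = D1 (D2 g) z + D1 g z"
    "D3 (D1 g) z = D1 (D3 g) z + 2 * D2 g z"
    "D3 (D2 g) z = D2 (D3 g) z + D3 g z"
    unfolding D_eq_dz
    by (simp_all add: dz_dz) (simp_all add: dz_def power2_eq_square algebra_simps)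
qed (simp_all add: admissible_op_deriv_gen)

interpretation E_triple: sl2_triple E1 E2 E3
proof
  fix g z assume "smooth g" "z \<in> Lambda"
  then show "E2 (E1 g) z = E1 (E2 g) z + E1 g z"
    "E3 (E1 g) z = E1 (E3 g) z + 2 * E2 g z"
    "E3 (E2 g) z = E2 (E3 g) z + E3 g z"
    unfolding E_eq_dzb
    by (simp_all add: dzb_dzb) (simp_all add: dzb_def power2_eq_square algebra_simps)
qed (simp_all add: admissible_op_deriv_gen)

lemma mono_op_eq_ord_mono:
  "mono_op (a, b, c, a', b', c') f = D_triple.ord_mono (a, b, c) (E_triple.ord_mono (a', b', c') f)"
  by (simp add: mono_op_def)

lemma admissible_op_mono_op: "admissible_op (mono_op t)"
proof -
  obtain a b c a' b' c' where t: "t = (a, b, c, a', b', c')" by (cases t)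
  have "mono_op t = (\<lambda>f. D_triple.ord_mono (a, b, c) (E_triple.ord_mono (a', b', c') f))"
    by (simp add: fun_eq_iff t mono_op_def)
  with admissible_op_comp[OF D_triple.admissible_op_ord_mono[of "(a, b, c)"]
      E_triple.admissible_op_ord_mono[of "(a', b', c')"]]
  show ?thesis by simp
qed

definition ops_commute :: "dop \<Rightarrow> dop \<Rightarrow> bool" where
  "ops_commute X A \<longleftrightarrow> (\<forall>h w. smooth h \<longrightarrow> w \<in> Lambda \<longrightarrow> X (A h) w = A (X h) w)"

lemma ops_commute_comp:
  assumes A: "admissible_op A" and B: "admissible_op B"
    and XA: "ops_commute X A" and XB: "ops_commute X B"
  shows "ops_commute X (\<lambda>h. A (B h))"
  unfolding ops_commute_def
proof (intro allI impI)
  fix h w assume h: "smooth h" and w: "w \<in> Lambda"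
  have "X (A (B h)) w = A (X (B h)) w"
    using XA admissible_op_smooth[OF B h] w unfolding ops_commute_def by blast
  also have "\<dots> = A (B (X h)) w"
    using XB h by (intro admissible_op_cong[OF A _ w]) (simp add: ops_commute_def)
  finally show "X (A (B h)) w = A (B (X h)) w" .
qed

lemma ops_commute_funpow:
  assumes A: "admissible_op A" and XA: "ops_commute X A"
  shows "ops_commute X (A ^^ n)"
proof (induction n)
  case 0
  then show ?case by (simp add: ops_commute_def)
next
  case (Suc n)
  then show ?case
    using ops_commute_comp[OF A admissible_op_funpow[OF A] XA] by (simp add: comp_def)
qed

lemma E_D_commute: "E \<in> {E1, E2, E3} \<Longrightarrow> D \<in> {D1, D2, D3} \<Longrightarrow> ops_commute E D"
  by (auto simp: ops_commute_def E_eq_dzb D_eq_dz dzb_dz_commute)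

lemma E_ord_mono_commute:
  assumes E: "E \<in> {E1, E2, E3}"
  shows "ops_commute E (D_triple.ord_mono s)"
proof -
  obtain a b c where s: "s = (a, b, c)" by (cases s)
  have D: "admissible_op D1" "admissible_op D2" "admissible_op D3"
    by (simp_all add: admissible_op_deriv_gen)
  have c: "ops_commute E D1" "ops_commute E D2" "ops_commute E D3"
    using E_D_commute[OF E] by simp_all
  have "ops_commute E (\<lambda>g. (D1 ^^ a) ((D2 ^^ b) ((D3 ^^ c) g)))"
    using ops_commute_comp[OF admissible_op_funpow[OF D(1)]
        admissible_op_comp[OF admissible_op_funpow[OF D(2)] admissible_op_funpow[OF D(3)]]
        ops_commute_funpow[OF D(1) c(1)]
        ops_commute_comp[OF admissible_op_funpow[OF D(2)] admissible_op_funpow[OF D(3)]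
          ops_commute_funpow[OF D(2) c(2)] ops_commute_funpow[OF D(3) c(3)]]] .
  then show ?thesis by (simp add: s)
qed

section \<open>Operators in normal form\<close>

lemma op_add_eq: "op_add L M = (\<lambda>f z. L f z + M f z)"
  and op_scale_eq: "op_scale c L = (\<lambda>f z. c * L f z)"
  and op_comp_eq: "op_comp L M = (\<lambda>f. L (M f))"
  by (simp_all add: fun_eq_iff op_add_def op_scale_def op_comp_def)

lemma op_eq_refl: "op_eq L L"
  and op_eq_trans: "op_eq L M \<Longrightarrow> op_eq M N \<Longrightarrow> op_eq L N"
  unfolding op_eq_def by auto

inductive B_span :: "dop \<Rightarrow> bool" where
  B_span_zero: "B_span (\<lambda>f z. 0)"
| B_span_mono: "A_coeff V \<Longrightarrow> B_span (\<lambda>f z. V z * mono_op t f z)"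
| B_span_add: "B_span L \<Longrightarrow> B_span M \<Longrightarrow> B_span (op_add L M)"
| B_span_cong: "B_span M \<Longrightarrow> op_eq L M \<Longrightarrow> B_span L"

lemma B_span_sum:
  "finite I \<Longrightarrow> (\<And>i. i \<in> I \<Longrightarrow> B_span (Ls i)) \<Longrightarrow> B_span (\<lambda>f z. \<Sum>i\<in>I. Ls i f z)"
proof (induction I rule: finite_induct)
  case (insert j I)
  then have "B_span (op_add (Ls j) (\<lambda>f z. \<Sum>i\<in>I. Ls i f z))"
    by (intro B_span_add) auto
  with insert(1,2) show ?case
    by (simp add: op_add_eq)
qed (simp add: B_span_zero)

lemma B_span_smooth: "B_span L \<Longrightarrow> smooth f \<Longrightarrow> smooth (L f)"
proof (induction rule: B_span.induct)
  case (B_span_mono V t)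
  then show ?case
    using smooth_mult[OF A_coeff_smooth admissible_op_smooth[OF admissible_op_mono_op]] by blast
next
  case (B_span_cong M L)
  then show ?case
    using smooth_cong[of "M f" "L f"] by (simp add: op_eq_def)
qed (simp_all add: smooth_const smooth_add op_add_eq)

lemma B_span_lmult:
  assumes a: "A_coeff a" and "B_span M"
  shows "B_span (\<lambda>f z. a z * M f z)"
  using \<open>B_span M\<close>
proof (induction rule: B_span.induct)
  case B_span_zero
  then show ?case by (simp add: B_span.B_span_zero)
next
  case (B_span_mono V t)
  then show ?case
    using B_span.B_span_mono[OF A_coeff_mult[OF a B_span_mono], of t]
    by (simp add: mult.assoc)
next
  case (B_span_add L M)
  then show ?case
    using B_span.B_span_add[OF B_span_add.IH] by (simp add: op_add_eq distrib_left)
next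
  case (B_span_cong M L)
  then show ?case
    by (auto intro: B_span.B_span_cong simp: op_eq_def)
qed

lemma B_span_scale: "B_span M \<Longrightarrow> B_span (op_scale c M)"
  using B_span_lmult[OF A_coeff_const] by (simp add: op_scale_eq)

lemma B_span_id: "B_span (\<lambda>f. f)"
  using B_span_mono[OF A_coeff_one, of "(0, 0, 0, 0, 0, 0)"] by (simp add: mono_op_def)

lemma B_span_deriv_gen_comp:
  assumes X: "X \<in> deriv_gens" and Xmono: "\<And>t. B_span (\<lambda>f. X (mono_op t f))"
    and "B_span L"
  shows "B_span (\<lambda>f. X (L f))"
  using \<open>B_span L\<close>
proof (induction rule: B_span.induct)
  case B_span_zero
  show ?case
    by (rule B_span_cong[OF B_span.B_span_zero])
      (simp add: op_eq_def admissible_op_zero[OF admissible_op_deriv_gen[OF X]])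
next
  case (B_span_mono V t)
  have "B_span (op_add (\<lambda>f z. X V z * mono_op t f z) (\<lambda>f z. V z * X (mono_op t f) z))"
    by (intro B_span_add B_span.B_span_mono A_coeff_deriv_gen[OF X] B_span_lmult Xmono B_span_mono)
  then show ?case
    by (rule B_span_cong) (auto simp: op_eq_def op_add_eq deriv_gen_mult[OF X] A_coeff_smooth
        B_span_mono admissible_op_smooth[OF admissible_op_mono_op])
next
  case (B_span_add L M)
  then show ?case
    by (intro B_span_cong[OF B_span.B_span_add[OF B_span_add.IH]])
      (auto simp: op_eq_def op_add_eq admissible_op_deriv_gen[OF X] B_span_smooth
        intro!: admissible_op_add)
next
  case (B_span_cong M L)
  then show ?case
    by (intro B_span.B_span_cong[OF B_span_cong.IH])
      (auto simp: op_eq_def intro!: admissible_op_cong[OF admissible_op_deriv_gen[OF X]])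
qed

lemma B_span_ord_span_D:
  assumes "D_triple.ord_span Op"
  shows "B_span (\<lambda>f. Op (E_triple.ord_mono s' f))"
  using assms
proof (induction rule: D_triple.ord_span.induct)
  case (ord_span_mono s)
  obtain a b c a' b' c' where "s = (a, b, c)" "s' = (a', b', c')" by (cases s, cases s')
  then show ?case
    using B_span_mono[OF A_coeff_one, of "(a, b, c, a', b', c')"]
    by (simp add: mono_op_eq_ord_mono)
next
  case (ord_span_add A B)
  then show ?case using B_span_add by (simp add: op_add_eq)
next
  case (ord_span_scale A c)
  then show ?case using B_span_scale by (simp add: op_scale_eq)
next
  case (ord_span_cong A B)
  then show ?case
    by (intro B_span_cong[OF ord_span_cong.IH])
      (simp add: op_eq_def admissible_op_smooth[OF E_triple.admissible_op_ord_mono])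
qed (simp add: B_span_zero)

lemma B_span_ord_span_E:
  assumes "E_triple.ord_span Op"
  shows "B_span (\<lambda>f. D_triple.ord_mono s (Op f))"
  using assms
proof (induction rule: E_triple.ord_span.induct)
  case (ord_span_mono s')
  obtain a b c a' b' c' where "s = (a, b, c)" "s' = (a', b', c')" by (cases s, cases s')
  then show ?case
    using B_span_mono[OF A_coeff_one, of "(a, b, c, a', b', c')"]
    by (simp add: mono_op_eq_ord_mono)
next
  case ord_span_zero
  show ?case
    by (rule B_span_cong[OF B_span_zero])
      (simp add: op_eq_def admissible_op_zero[OF D_triple.admissible_op_ord_mono])
next
  case (ord_span_add A B)
  show ?case
  proof (rule B_span_cong[OF B_span_add[OF ord_span_add.IH]], unfold op_eq_def,
      intro allI impI ballI)
    fix f z assume "smooth f" "z \<in> Lambda"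
    then show "D_triple.ord_mono s (\<lambda>z. A f z + B f z) z
        = op_add (\<lambda>f. D_triple.ord_mono s (A f)) (\<lambda>f. D_triple.ord_mono s (B f)) f z"
      using ord_span_add.hyps E_triple.ord_span_smooth
      by (simp add: op_add_eq admissible_op_add[OF D_triple.admissible_op_ord_mono])
  qed
next
  case (ord_span_scale A c)
  show ?case
  proof (rule B_span_cong[OF B_span_scale[OF ord_span_scale.IH]], unfold op_eq_def,
      intro allI impI ballI)
    fix f z assume "smooth f" "z \<in> Lambda"
    then show "D_triple.ord_mono s (\<lambda>z. c * A f z) z
        = op_scale c (\<lambda>f. D_triple.ord_mono s (A f)) f z"
      using ord_span_scale.hyps E_triple.ord_span_smooth
      by (simp add: op_scale_eq admissible_op_cmult[OF D_triple.admissible_op_ord_mono])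
  qed
next
  case (ord_span_cong A B)
  show ?case
  proof (rule B_span_cong[OF ord_span_cong.IH], unfold op_eq_def, intro allI impI ballI)
    fix f z assume "smooth f" "z \<in> Lambda"
    then show "D_triple.ord_mono s (B f) z = D_triple.ord_mono s (A f) z"
      using ord_span_cong.hyps(2)
      by (intro admissible_op_cong[OF D_triple.admissible_op_ord_mono]) auto
  qed
qed

lemma B_span_deriv_gen_mono:
  assumes X: "X \<in> deriv_gens"
  shows "B_span (\<lambda>f. X (mono_op t f))"
proof -
  obtain a b c a' b' c' where t: "t = (a, b, c, a', b', c')" by (cases t)
  have mono_op: "mono_op t f = D_triple.ord_mono (a, b, c) (E_triple.ord_mono (a', b', c') f)" for f
    by (simp only: t mono_op_eq_ord_mono)
  from X consider "X \<in> {D1, D2, D3}" | "X \<in> {E1, E2, E3}" by blast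
  then show ?thesis
  proof cases
    case 1
    then have "D_triple.ord_span (\<lambda>g. X (D_triple.ord_mono (a, b, c) g))"
      using D_triple.ord_span_X1 D_triple.ord_span_X2 D_triple.ord_span_X3 by blast
    from B_span_ord_span_D[OF this] show ?thesis
      unfolding mono_op .
  next
    case 2
    then have span: "E_triple.ord_span (\<lambda>g. X (E_triple.ord_mono (a', b', c') g))"
      using E_triple.ord_span_X1 E_triple.ord_span_X2 E_triple.ord_span_X3 by blast
    show ?thesis
      unfolding mono_op
    proof (rule B_span_cong[OF B_span_ord_span_E[OF span]], unfold op_eq_def, intro allI impI ballI)
      fix f z assume "smooth f" "z \<in> Lambda"
      then show "X (D_triple.ord_mono (a, b, c) (E_triple.ord_mono (a', b', c') f)) z
          = D_triple.ord_mono (a, b, c) (X (E_triple.ord_mono (a', b', c') f)) z"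
        using E_ord_mono_commute[OF 2, of "(a, b, c)"]
          admissible_op_smooth[OF E_triple.admissible_op_ord_mono]
        unfolding ops_commute_def by blast
    qed
  qed
qed

lemma B_span_deriv_gen: "X \<in> deriv_gens \<Longrightarrow> B_span L \<Longrightarrow> B_span (\<lambda>f. X (L f))"
  by (rule B_span_deriv_gen_comp[OF _ B_span_deriv_gen_mono])

lemma B_span_mono_op_comp:
  assumes "B_span M"
  shows "B_span (\<lambda>f. mono_op t (M f))"
proof -
  have pow: "B_span (\<lambda>f. (X ^^ n) (L f))" if "X \<in> deriv_gens" "B_span L" for X n L
  proof (induction n)
    case 0
    show ?case using that(2) by simp
  next
    case (Suc n)
    show ?case using B_span_deriv_gen[OF that(1) Suc.IH] by simp
  qed
  obtain a b c a' b' c' where t: "t = (a, b, c, a', b', c')" by (cases t)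
  show ?thesis
    unfolding t mono_op_def using assms by (simp add: pow)
qed

lemma B_span_comp:
  assumes "B_span L" "B_span M"
  shows "B_span (op_comp L M)"
  using assms(1) unfolding op_comp_eq
proof (induction rule: B_span.induct)
  case (B_span_mono V t)
  then show ?case by (intro B_span_lmult B_span_mono_op_comp assms(2))
next
  case (B_span_add L1 L2)
  then show ?case using B_span.B_span_add by (simp add: op_add_eq)
next
  case (B_span_cong L1 L2)
  then show ?case
    by (intro B_span.B_span_cong[OF B_span_cong.IH])
      (simp add: op_eq_def B_span_smooth[OF assms(2)])
qed (simp add: B_span_zero)

lemma B_ops_op_add:
  assumes "L \<in> B_ops" "M \<in> B_ops"
  shows "op_add L M \<in> B_ops"
proof -
  obtain S V S' V' where S: "finite S" "\<forall>t\<in>S. V t \<in> A_all"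
      "op_eq L (\<lambda>f z. \<Sum>t\<in>S. V t z * mono_op t f z)"
    and S': "finite S'" "\<forall>t\<in>S'. V' t \<in> A_all"
      "op_eq M (\<lambda>f z. \<Sum>t\<in>S'. V' t z * mono_op t f z)"
    using assms unfolding B_ops_def by blast
  define U where "U t z = (if t \<in> S then V t z else 0) + (if t \<in> S' then V' t z else 0)" for t z
  have "U t \<in> A_all" for t
  proof -
    have "(\<lambda>z. if t \<in> S then V t z else 0) \<in> A_all" "(\<lambda>z. if t \<in> S' then V' t z else 0) \<in> A_all"
      using S(2) S'(2) A_all_of_A_n[OF A_n_zero]
      by (cases "t \<in> S", simp_all) (cases "t \<in> S'", simp_all)
    then show ?thesis unfolding U_def by (rule A_all_add)
  qed
  moreover have "(\<Sum>t\<in>S \<union> S'. U t z * mono_op t f z)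
      = (\<Sum>t\<in>S. V t z * mono_op t f z) + (\<Sum>t\<in>S'. V' t z * mono_op t f z)" for f z
    using S(1) S'(1)
    by (simp add: U_def distrib_right sum.distrib if_distrib[of "\<lambda>x. x * _"]
        sum.inter_restrict[symmetric] Int_absorb1 cong: if_cong)
  ultimately show ?thesis
    using S S' unfolding B_ops_def
    by (intro CollectI exI[of _ "S \<union> S'"] exI[of _ U]) (simp add: op_eq_def op_add_eq)
qed

lemma B_ops_iff_B_span: "L \<in> B_ops \<longleftrightarrow> B_span L"
proof
  assume "L \<in> B_ops"
  then obtain S V where S: "finite S" "\<forall>t\<in>S. V t \<in> A_all"
    and L: "op_eq L (\<lambda>f z. \<Sum>t\<in>S. V t z * mono_op t f z)"
    unfolding B_ops_def by blast
  have "B_span (\<lambda>f z. \<Sum>t\<in>S. V t z * mono_op t f z)"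
    using S A_coeff_iff by (intro B_span_sum B_span_mono) auto
  with L show "B_span L"
    by (rule B_span_cong[rotated])
next
  assume "B_span L"
  then show "L \<in> B_ops"
  proof (induction rule: B_span.induct)
    case B_span_zero
    show ?case
      unfolding B_ops_def by (intro CollectI exI[of _ "{}"]) (simp add: op_eq_def)
  next
    case (B_span_mono V t)
    then obtain W where "W \<in> A_all" "\<forall>z\<in>Lambda. V z = W z"
      unfolding A_coeff_iff by blast
    then show ?case
      unfolding B_ops_def
      by (intro CollectI exI[of _ "{t}"] exI[of _ "\<lambda>_. W"]) (simp add: op_eq_def)
  next
    case (B_span_add L M)
    then show ?case using B_ops_op_add by blast
  next
    case (B_span_cong M L)
    then show ?case
      unfolding B_ops_def by (auto intro: op_eq_trans)
  qed
qed

section \<open>The algebra generated by the seven operators\<close>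

abbreviation generators :: "dop set" where
  "generators \<equiv> {inv_diff, D1, D2, D3, E1, E2, E3}"

definition G_ops :: "dop set" where
  "G_ops = {L. \<exists>M\<in>gen_alg generators. op_eq L M}"

lemma inv_diff_eq_mult_op: "inv_diff = mult_op inv_diff_fun"
  by (simp add: inv_diff_def inv_diff_fun_def[abs_def])

lemma admissible_op_gen_alg: "M \<in> gen_alg generators \<Longrightarrow> admissible_op M"
proof (induction rule: gen_alg.induct)
  case (gen_base g)
  then show ?case
    by (auto simp: inv_diff_eq_mult_op admissible_op_mult_op smooth_inv_diff_fun
        admissible_op_deriv_gen)
next
  case (gen_comp L M)
  then show ?case by (simp add: op_comp_eq admissible_op_comp)
qed (simp_all add: admissible_op_id admissible_op_op_add admissible_op_op_scale)

lemma G_ops_gen_alg: "M \<in> gen_alg generators \<Longrightarrow> M \<in> G_ops"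
  unfolding G_ops_def using op_eq_refl by blast

lemma G_ops_cong: "M \<in> G_ops \<Longrightarrow> op_eq L M \<Longrightarrow> L \<in> G_ops"
  unfolding G_ops_def using op_eq_trans by blast

lemma G_ops_add: "L \<in> G_ops \<Longrightarrow> M \<in> G_ops \<Longrightarrow> op_add L M \<in> G_ops"
  unfolding G_ops_def by (auto intro!: bexI[OF _ gen_add] simp: op_eq_def op_add_eq)

lemma G_ops_scale: "L \<in> G_ops \<Longrightarrow> op_scale c L \<in> G_ops"
  unfolding G_ops_def by (auto intro!: bexI[OF _ gen_scale] simp: op_eq_def op_scale_eq)

lemma G_ops_comp:
  assumes "L \<in> G_ops" "M \<in> G_ops"
  shows "op_comp L M \<in> G_ops"
proof -
  obtain L' M' where L': "L' \<in> gen_alg generators" "op_eq L L'"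
    and M': "M' \<in> gen_alg generators" "op_eq M M'"
    using assms unfolding G_ops_def by blast
  have "op_eq (op_comp L M) (op_comp L' M')"
    unfolding op_eq_def op_comp_eq
  proof (intro allI impI ballI)
    fix f z assume f: "smooth f" and z: "z \<in> Lambda"
    have eqM: "\<forall>w\<in>Lambda. M f w = M' f w"
      using M'(2) f unfolding op_eq_def by blast
    have "smooth (M f)"
      using admissible_op_smooth[OF admissible_op_gen_alg[OF M'(1)] f] smooth_cong eqM by metis
    then have "L (M f) z = L' (M f) z"
      using L'(2) z unfolding op_eq_def by blast
    also have "\<dots> = L' (M' f) z"
      by (rule admissible_op_cong[OF admissible_op_gen_alg[OF L'(1)] eqM z])
    finally show "L (M f) z = L' (M' f) z" .
  qed
  with gen_comp[OF L'(1) M'(1)] show ?thesis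
    unfolding G_ops_def by blast
qed

lemma gen_alg_funpow:
  assumes "X \<in> gen_alg G" "h \<in> gen_alg G"
  shows "(\<lambda>f. (X ^^ n) (h f)) \<in> gen_alg G"
proof (induction n)
  case 0
  then show ?case using assms(2) by simp
next
  case (Suc n)
  then show ?case using gen_comp[OF assms(1) Suc.IH] by (simp add: op_comp_eq)
qed

lemma mono_op_gen_alg: "mono_op t \<in> gen_alg generators"
proof -
  obtain a b c a' b' c' where t: "t = (a, b, c, a', b', c')" by (cases t)
  have "(\<lambda>f. (D1 ^^ a) ((D2 ^^ b) ((D3 ^^ c) ((E1 ^^ a') ((E2 ^^ b') ((E3 ^^ c') ((\<lambda>f. f) f)))))))
      \<in> gen_alg generators"
    by (intro gen_alg_funpow gen_base gen_id) simp_all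
  then show ?thesis
    by (simp add: t mono_op_def[abs_def])
qed

definition G_mult :: "cfun \<Rightarrow> bool" where
  "G_mult V \<longleftrightarrow> smooth V \<and> mult_op V \<in> G_ops"

lemma G_mult_cong:
  assumes "G_mult V" "\<And>z. z \<in> Lambda \<Longrightarrow> W z = V z"
  shows "G_mult W"
proof -
  have V: "smooth V" "mult_op V \<in> G_ops"
    using assms(1) unfolding G_mult_def by auto
  have "smooth W"
    by (rule smooth_cong[OF V(1)]) (simp add: assms(2))
  moreover have "mult_op W \<in> G_ops"
    by (rule G_ops_cong[OF V(2)]) (simp add: op_eq_def mult_op_def assms(2))
  ultimately show ?thesis
    unfolding G_mult_def ..
qed

lemma G_mult_add: "G_mult V \<Longrightarrow> G_mult W \<Longrightarrow> G_mult (\<lambda>z. V z + W z)"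
  using G_ops_add[of "mult_op V" "mult_op W"]
  by (simp add: G_mult_def smooth_add op_add_eq mult_op_def[abs_def] distrib_right)

lemma G_mult_cmult: "G_mult V \<Longrightarrow> G_mult (\<lambda>z. c * V z)"
  using G_ops_scale[of "mult_op V" c]
  by (simp add: G_mult_def smooth_cmult op_scale_eq mult_op_def[abs_def] mult.assoc)

lemma G_mult_mult: "G_mult V \<Longrightarrow> G_mult W \<Longrightarrow> G_mult (\<lambda>z. V z * W z)"
  using G_ops_comp[of "mult_op V" "mult_op W"]
  by (simp add: G_mult_def smooth_mult op_comp_eq mult_op_def[abs_def] mult.assoc)

lemma G_mult_one: "G_mult (\<lambda>_. 1)"
  using G_ops_gen_alg[OF gen_id] by (simp add: G_mult_def smooth_const mult_op_def[abs_def])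

lemma G_mult_inv_diff_fun: "G_mult inv_diff_fun"
  using G_ops_gen_alg[OF gen_base, of inv_diff]
  by (simp add: G_mult_def smooth_inv_diff_fun inv_diff_eq_mult_op)

lemma G_mult_deriv_gen:
  assumes X: "X \<in> deriv_gens" and V: "G_mult V"
  shows "G_mult (X V)"
proof -
  have XG: "X \<in> G_ops" using X by (intro G_ops_gen_alg gen_base) auto
  have "op_add (op_comp X (mult_op V)) (op_scale (-1) (op_comp (mult_op V) X)) \<in> G_ops"
    using V XG unfolding G_mult_def by (intro G_ops_add G_ops_scale G_ops_comp) auto
  moreover have "op_eq (mult_op (X V))
      (op_add (op_comp X (mult_op V)) (op_scale (-1) (op_comp (mult_op V) X)))"
    using V deriv_gen_mult[OF X]
    by (simp add: op_eq_def op_add_eq op_scale_eq op_comp_eq mult_op_def[abs_def] G_mult_def)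
  ultimately have "mult_op (X V) \<in> G_ops"
    by (rule G_ops_cong)
  moreover have "smooth (X V)"
    using V admissible_op_smooth[OF admissible_op_deriv_gen[OF X]] unfolding G_mult_def by blast
  ultimately show ?thesis
    unfolding G_mult_def by blast
qed

text \<open>The degree one monomials: \<open>z/(z - cnj z) = (1 - D1 u - E1 u)/2\<close> for
  \<open>u = 1/(z - cnj z)\<close>, and \<open>cnj z/(z - cnj z) = z/(z - cnj z) - 1\<close>.\<close>

lemma G_mult_monom_1_0: "G_mult (monom_fun 1 0 1)"
proof -
  let ?u = inv_diff_fun
  have "G_mult (D1 ?u)" "G_mult (E1 ?u)"
    using G_mult_deriv_gen[of D1 ?u] G_mult_deriv_gen[of E1 ?u] G_mult_inv_diff_fun by simp_all
  then have "G_mult (\<lambda>z. (1/2) * ((-1) * D1 ?u z + (-1) * E1 ?u z + 1))"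
    by (intro G_mult_cmult G_mult_add G_mult_one)
  moreover have "monom_fun 1 0 1 z = (1/2) * ((-1) * D1 ?u z + (-1) * E1 ?u z + 1)"
    if z: "z \<in> Lambda" for z
  proof -
    have du: "(z - cnj z) * ?u z = 1"
      using Lambda_diff_cnj_nonzero[OF z] by (simp add: inv_diff_fun_def)
    have "2 * (z * ?u z) = (z + cnj z) * ?u z + (z - cnj z) * ?u z"
      by (simp add: algebra_simps)
    also have "\<dots> = (z + cnj z) * ((z - cnj z) * ?u z) * ?u z + 1"
      by (simp only: du mult_1_right)
    also have "\<dots> = z\<^sup>2 * ?u z ^ 2 - cnj z ^ 2 * ?u z ^ 2 + 1"
      by (simp add: power2_eq_square algebra_simps)
    finally have "z * ?u z = (1/2) * (z\<^sup>2 * ?u z ^ 2 - cnj z ^ 2 * ?u z ^ 2 + 1)"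
      by (simp add: mult.commute)
    then show ?thesis
      by (simp add: D1_def E1_def wirtinger_inv_diff_fun[OF z] monom_conv_inv_diff_fun)
  qed
  ultimately show ?thesis by (rule G_mult_cong)
qed

lemma G_mult_monom_0_1: "G_mult (monom_fun 0 1 1)"
proof -
  have "G_mult (\<lambda>z. monom_fun 1 0 1 z + (-1) * 1)"
    by (intro G_mult_add G_mult_monom_1_0 G_mult_cmult G_mult_one)
  then show ?thesis
  proof (rule G_mult_cong)
    fix z assume "z \<in> Lambda"
    from monom_raise[OF this, of 0 0 0]
    have "1 = monom_fun 1 0 1 z - monom_fun 0 1 1 z"
      by (simp add: monom_fun_def[of 0 0 0])
    then show "monom_fun 0 1 1 z = monom_fun 1 0 1 z + (-1) * 1"
      by algebra
  qed
qed

lemma G_mult_monom_corner: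
  "G_mult (monom_fun (Suc k) k (Suc k))" "G_mult (monom_fun k (Suc k) (Suc k))"
proof (induction k)
  case 0
  show "G_mult (monom_fun (Suc 0) 0 (Suc 0))" "G_mult (monom_fun 0 (Suc 0) (Suc 0))"
    using G_mult_monom_1_0 G_mult_monom_0_1 by simp_all
next
  case (Suc k)
  have "G_mult (\<lambda>z. (- 1 / of_nat (Suc k)) * D1 (monom_fun (Suc k) k (Suc k)) z)"
    by (rule G_mult_cmult[OF G_mult_deriv_gen[OF _ Suc.IH(1)]]) simp
  then show "G_mult (monom_fun (Suc (Suc k)) (Suc k) (Suc (Suc k)))"
    by (rule G_mult_cong) (simp add: D1_monom del: of_nat_Suc)
  have "G_mult (\<lambda>z. (1 / of_nat (Suc k)) * E1 (monom_fun k (Suc k) (Suc k)) z)"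
    by (rule G_mult_cmult[OF G_mult_deriv_gen[OF _ Suc.IH(2)]]) simp
  then show "G_mult (monom_fun (Suc k) (Suc (Suc k)) (Suc (Suc k)))"
    by (rule G_mult_cong) (simp add: E1_monom del: of_nat_Suc)
qed

lemma Omega_split:
  assumes "(p, q) \<in> Omega n" "n \<ge> 2" "(p, q) \<noteq> (n, n - 1)" "(p, q) \<noteq> (n - 1, n)"
  obtains p1 q1 where "(p1, q1) \<in> Omega 1" "p1 \<le> p" "q1 \<le> q" "(p - p1, q - q1) \<in> Omega (n - 1)"
proof
  let ?p1 = "if p = n \<or> (p = n - 1 \<and> q = n - 1) then 1 else 0 :: nat"
  let ?q1 = "if q = n then 1 else 0 :: nat"
  show "(?p1, ?q1) \<in> Omega 1" "?p1 \<le> p" "?q1 \<le> q" "(p - ?p1, q - ?q1) \<in> Omega (n - 1)"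
    using assms by (auto simp: Omega_def)
qed

lemma G_mult_monom: "(p, q) \<in> Omega n \<Longrightarrow> G_mult (monom_fun p q n)"
proof (induction n arbitrary: p q rule: less_induct)
  case (less n)
  consider "n \<le> 1" | "n \<ge> 2" "(p, q) = (n, n - 1)" | "n \<ge> 2" "(p, q) = (n - 1, n)"
    | "n \<ge> 2" "(p, q) \<noteq> (n, n - 1)" "(p, q) \<noteq> (n - 1, n)"
    by linarith
  then show ?case
  proof cases
    case 1
    with less.prems have "(p, q, n) \<in> {(0, 0, 1), (1, 0, 1), (0, 1, 1)}"
      by (auto simp: Omega_def)
    then show ?thesis
      using G_mult_monom_1_0 G_mult_monom_0_1 G_mult_inv_diff_fun
      by (auto simp: inv_diff_fun_eq_monom)
  next
    case 2
    then show ?thesis using G_mult_monom_corner(1)[of "n - 1"] by simp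
  next
    case 3
    then show ?thesis using G_mult_monom_corner(2)[of "n - 1"] by simp
  next
    case 4
    with less.prems obtain p1 q1 where
      pq1: "(p1, q1) \<in> Omega 1" "p1 \<le> p" "q1 \<le> q" "(p - p1, q - q1) \<in> Omega (n - 1)"
      by (blast elim: Omega_split)
    then have "G_mult (\<lambda>z. monom_fun p1 q1 1 z * monom_fun (p - p1) (q - q1) (n - 1) z)"
      using 4 by (intro G_mult_mult less.IH) auto
    then show ?thesis
      using pq1(2,3) 4 by (simp add: monom_mult)
  qed
qed

lemma A_coeff_G_mult: "A_coeff V \<Longrightarrow> G_mult V"
proof (induction rule: A_coeff.induct)
  case A_coeff_zero
  show ?case using G_mult_cmult[OF G_mult_one, of 0] by simp
next
  case (A_coeff_cong V W)
  then show ?case using G_mult_cong[of V W] by blast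
qed (simp_all add: G_mult_cmult G_mult_monom G_mult_add)

lemma B_span_G_ops: "B_span L \<Longrightarrow> L \<in> G_ops"
proof (induction rule: B_span.induct)
  case B_span_zero
  show ?case
    using G_ops_scale[OF G_ops_gen_alg[OF gen_id], of 0] by (simp add: op_scale_eq)
next
  case (B_span_mono V t)
  then have "mult_op V \<in> G_ops"
    using A_coeff_G_mult unfolding G_mult_def by blast
  then have "op_comp (mult_op V) (mono_op t) \<in> G_ops"
    using G_ops_comp G_ops_gen_alg[OF mono_op_gen_alg] by blast
  then show ?case
    by (simp add: op_comp_eq mult_op_def[abs_def])
next
  case (B_span_add L M)
  then show ?case using G_ops_add by blast
next
  case (B_span_cong M L)
  then show ?case using G_ops_cong by blast
qed

lemma gen_alg_B_span: "M \<in> gen_alg generators \<Longrightarrow> B_span M"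
proof (induction rule: gen_alg.induct)
  case (gen_base g)
  have "B_span inv_diff"
    using B_span_mono[OF A_coeff_inv_diff_fun, of "(0, 0, 0, 0, 0, 0)"]
    by (simp add: mono_op_def inv_diff_eq_mult_op mult_op_def[abs_def])
  moreover have "B_span X" if "X \<in> deriv_gens" for X
    using B_span_deriv_gen[OF that B_span_id] by simp
  ultimately show ?case using gen_base by blast
qed (simp_all add: B_span_id B_span_add B_span_scale B_span_comp)

theorem theorem2:
  shows "(\<lambda>f. f) \<in> B_ops
    \<and> (\<forall>L\<in>B_ops. \<forall>M\<in>B_ops. op_add L M \<in> B_ops)
    \<and> (\<forall>c. \<forall>L\<in>B_ops. op_scale c L \<in> B_ops)
    \<and> (\<forall>L\<in>B_ops. \<forall>M\<in>B_ops. op_comp L M \<in> B_ops)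
    \<and> B_ops = {L. \<exists>M\<in>gen_alg {inv_diff, D1, D2, D3, E1, E2, E3}. op_eq L M}"
proof -
  have B_ops: "B_ops = Collect B_span"
    using B_ops_iff_B_span by blast
  have "Collect B_span = G_ops"
    using B_span_G_ops gen_alg_B_span B_span_cong unfolding G_ops_def by blast
  then show ?thesis
    unfolding B_ops G_ops_def
    using B_span_id B_span_add B_span_scale B_span_comp by blast
qed

end
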